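(* Let $c\ge0$. Let $w^*$ be an optimal solution of the spectral width problem $$\min_{w,\lambda_n,\lambda_2,\mu}\ \lambda_n-\lambda_2\quad\text{s.t.}\quad L(w)-\lambda_nI\preceq0,\ \ L(w)+\mu\boldsymbol e\boldsymbol e^T-\lambda_2I\succeq0,\ \ \sum_{\{i,j\}\in E_3}w_{ij}=c,\ \ w_{ij}\ge0,$$ where $L(w)=\sum_{\{i,j\}\in E_3}w_{ij}L_{ij}+L_0$, and let $(\xi,u_1,\dots,u_n,v_1,\dots,v_n)$ be an optimal solution of the embedding problem $$\max\ c\xi-\sum_{\{i,j\}\in E_1\cup E_2}\|u_i-u_j\|^2+\sum_{\{i,j\}\in E_1\cup E_2}\|v_i-v_j\|^2$$ subject to $\sum_{i\in V}\|u_i\|^2=1$, $\sum_{i\in V}\|v_i\|^2=1$, $\sum_{i\in V}u_i=0$, $\|u_i-u_j\|^2-\|v_i-v_j\|^2+\xi\le0$ for all $\{i,j\}\in E_3$, with $\xi\in\mathbb{R}$, $u_i,v_i\in\mathbb{R}^n$. Then for every $p\in\mathbb{R}^n$, the vector $(p^Tu_1,\dots,p^Tu_n)^T$ lies in the eigenspace of $L(w^* )$ for its second smallest eigenvalue $\lambda_2(L(w^* ))$, and the vector $(p^Tv_1,\dots,p^Tv_n)^T$ lies in the eigenspace of $L(w^* )$ for its largest eigenvalue $\lambda_n(L(w^* ))$.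
   Context: A multiplex network consists of two layers $G_1=(V_1,E_1)$ and $G_2=(V_2,E_2)$, simple undirected graphs with $|V_1|=|V_2|=N$; vertices of $G_1$ are numbered $1,\dots,N$, those of $G_2$ are numbered $N+1,\dots,2N$, $n=2N$, $V=V_1\cup V_2$; the multiplex is assumed connected. The interlayer edges form the perfect matching $E_3=\{\{i,N+i\}:i=1,\dots,N\}$ with nonnegative weights $w_{ij}$. $L_{ij}=(\delta_i-\delta_j)(\delta_i-\delta_j)^T$, $\delta_i$ the $i$-th standard basis vector of $\mathbb{R}^n$; $L_0=\sum_{\{i,j\}\in E_1\cup E_2}L_{ij}$; $\boldsymbol e$ is the all-ones vector in $\mathbb{R}^n$. *)

theory Defs
  imports "Jordan_Normal_Form.Char_Poly" "HOL-Library.Multiset"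
begin

(* Vertices are 0..<n (paper: 1..n, shifted by one); layer 1 = {0..<N}, layer 2 = {N..<2N}.
   Undirected edges {i,j} are represented as ordered pairs (i,j) with i < j. *)

definition E3 :: "nat \<Rightarrow> (nat \<times> nat) set" where
  "E3 N = {(i, N + i) | i. i < N}"

definition Lij :: "nat \<Rightarrow> nat \<Rightarrow> nat \<Rightarrow> real mat" where
  "Lij n i j = (let d = unit_vec n i - unit_vec n j in mat n n (\<lambda>(k,l). d $ k * d $ l))"

definition L0 :: "nat \<Rightarrow> (nat \<times> nat) set \<Rightarrow> real mat" where
  "L0 n E = mat n n (\<lambda>(k,l). \<Sum>(i,j)\<in>E. Lij n i j $$ (k,l))"

(* L(w) = sum over {i,N+i} in E3 of w_i L_{i,N+i} + L_0;  w i is the weight of edge {i, N+i} *)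
definition Lw :: "nat \<Rightarrow> (nat \<times> nat) set \<Rightarrow> (nat \<Rightarrow> real) \<Rightarrow> real mat" where
  "Lw N E w = mat (2*N) (2*N) (\<lambda>(k,l). (\<Sum>i<N. w i * Lij (2*N) i (N+i) $$ (k,l)) + L0 (2*N) E $$ (k,l))"

definition psd :: "real mat \<Rightarrow> bool" where
  "psd A \<longleftrightarrow> (\<forall>x\<in>carrier_vec (dim_row A). 0 \<le> x \<bullet> (A *\<^sub>v x))"

definition nsd :: "real mat \<Rightarrow> bool" where
  "nsd A \<longleftrightarrow> (\<forall>x\<in>carrier_vec (dim_row A). x \<bullet> (A *\<^sub>v x) \<le> 0)"

definition ones_mat :: "nat \<Rightarrow> real mat" where
  "ones_mat n = mat n n (\<lambda>_. 1)"

definition sw_feasible :: "nat \<Rightarrow> (nat \<times> nat) set \<Rightarrow> real \<Rightarrow> (nat \<Rightarrow> real) \<Rightarrow> real \<Rightarrow> real \<Rightarrow> real \<Rightarrow> bool" where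
  "sw_feasible N E c w lmax l2 mu \<longleftrightarrow>
     nsd (Lw N E w - lmax \<cdot>\<^sub>m 1\<^sub>m (2*N)) \<and>
     psd (Lw N E w + mu \<cdot>\<^sub>m ones_mat (2*N) - l2 \<cdot>\<^sub>m 1\<^sub>m (2*N)) \<and>
     (\<Sum>i<N. w i) = c \<and> (\<forall>i<N. 0 \<le> w i)"

definition sw_optimal :: "nat \<Rightarrow> (nat \<times> nat) set \<Rightarrow> real \<Rightarrow> (nat \<Rightarrow> real) \<Rightarrow> bool" where
  "sw_optimal N E c w \<longleftrightarrow>
     (\<exists>lmax l2 mu. sw_feasible N E c w lmax l2 mu \<and>
        (\<forall>w' lmax' l2' mu'. sw_feasible N E c w' lmax' l2' mu' \<longrightarrow> lmax - l2 \<le> lmax' - l2'))"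

definition sqn :: "real vec \<Rightarrow> real" where
  "sqn x = x \<bullet> x"

definition emb_feasible :: "nat \<Rightarrow> real \<Rightarrow> (nat \<Rightarrow> real vec) \<Rightarrow> (nat \<Rightarrow> real vec) \<Rightarrow> bool" where
  "emb_feasible N xi u v \<longleftrightarrow>
     (\<forall>i<2*N. u i \<in> carrier_vec (2*N) \<and> v i \<in> carrier_vec (2*N)) \<and>
     (\<Sum>i<2*N. sqn (u i)) = 1 \<and> (\<Sum>i<2*N. sqn (v i)) = 1 \<and>
     (\<forall>k<2*N. (\<Sum>i<2*N. u i $ k) = 0) \<and>
     (\<forall>(i,j)\<in>E3 N. sqn (u i - u j) - sqn (v i - v j) + xi \<le> 0)"

definition emb_obj :: "nat \<Rightarrow> (nat \<times> nat) set \<Rightarrow> real \<Rightarrow> real \<Rightarrow> (nat \<Rightarrow> real vec) \<Rightarrow> (nat \<Rightarrow> real vec) \<Rightarrow> real" where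
  "emb_obj N E c xi u v = c * xi - (\<Sum>(i,j)\<in>E. sqn (u i - u j)) + (\<Sum>(i,j)\<in>E. sqn (v i - v j))"

definition emb_optimal :: "nat \<Rightarrow> (nat \<times> nat) set \<Rightarrow> real \<Rightarrow> real \<Rightarrow> (nat \<Rightarrow> real vec) \<Rightarrow> (nat \<Rightarrow> real vec) \<Rightarrow> bool" where
  "emb_optimal N E c xi u v \<longleftrightarrow> emb_feasible N xi u v \<and>
     (\<forall>xi' u' v'. emb_feasible N xi' u' v' \<longrightarrow> emb_obj N E c xi' u' v' \<le> emb_obj N E c xi u v)"

definition sorted_eigs :: "real mat \<Rightarrow> real list" where
  "sorted_eigs A = sorted_list_of_multiset (proots (char_poly A))"

definition lambda2 :: "real mat \<Rightarrow> real" where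
  "lambda2 A = sorted_eigs A ! 1"

definition lambda_max :: "real mat \<Rightarrow> real" where
  "lambda_max A = sorted_eigs A ! (dim_row A - 1)"

definition eigenspace :: "real mat \<Rightarrow> real \<Rightarrow> real vec set" where
  "eigenspace A l = {x \<in> carrier_vec (dim_row A). A *\<^sub>v x = l \<cdot>\<^sub>v x}"

definition connected_on :: "nat \<Rightarrow> (nat \<times> nat) set \<Rightarrow> bool" where
  "connected_on n E \<longleftrightarrow> (\<forall>i<n. \<forall>j<n. (i, j) \<in> (E \<union> E\<inverse>)\<^sup>*)"

end

(*
  The spectral width problem is a semidefinite program and the embedding problem is its dual.
  For feasible points the duality gap is an explicit sum of nonnegative slacks: writing x_r, y_r
  for the vectors of r-th coordinates of the embeddings u, v and L for L(w),

    lambda_n - lambda_2 - objective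
      = sum_r (lambda_n |y_r|^2 - y_r^T L y_r) + sum_r (x_r^T L x_r - lambda_2 |x_r|^2)
        + sum_i w_i (|v_i - v_(N+i)|^2 - |u_i - u_(N+i)|^2 - xi).

  Strong duality makes the gap vanish at optimal pairs. It comes from a finite minimax theorem
  (proved by Hahn-Banach): mixing Gram matrices shows that the embedding objectives form a
  concave-like family of payoffs, and a mixed strategy of the minimising player is a weight w
  whose spectral width does not exceed the embedding optimum, as one sees by testing against
  rank-one embeddings. Once the gap vanishes, every x_r and y_r attains its Rayleigh bound, so it
  is an eigenvector for lambda_2, resp. lambda_n, and so is every combination (p^T u_i)_i,
  (p^T v_i)_i. The spectral theorem identifies these bounds with the entries of the sorted list of
  roots of the characteristic polynomial.
*)

theory Submission
  imports Defs
begin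

section \<open>Quadratic forms\<close>

lemma scalar_prod_self_nonneg: "0 \<le> (x::real vec) \<bullet> x"
  using conjugate_square_ge_0_vec[of x] by simp

lemma scalar_prod_self_eq_0_iff: "x \<in> carrier_vec n \<Longrightarrow> (x::real vec) \<bullet> x = 0 \<longleftrightarrow> x = 0\<^sub>v n"
  using conjugate_square_eq_0_vec[of x n] by simp

lemma scalar_prod_self_pos_iff: "x \<in> carrier_vec n \<Longrightarrow> 0 < (x::real vec) \<bullet> x \<longleftrightarrow> x \<noteq> 0\<^sub>v n"
  using conjugate_square_greater_0_vec[of x n] by simp

lemma eq_mat_via_mult_vec:
  fixes A B :: "'a::comm_ring_1 mat"
  assumes A: "A \<in> carrier_mat n m" and B: "B \<in> carrier_mat n m"
    and eq: "\<And>x. x \<in> carrier_vec m \<Longrightarrow> A *\<^sub>v x = B *\<^sub>v x"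
  shows "A = B"
proof (rule eq_matI)
  fix i j assume ij: "i < dim_row B" "j < dim_col B"
  have "(A *\<^sub>v unit_vec m j) $ i = (B *\<^sub>v unit_vec m j) $ i" by (simp add: eq)
  thus "A $$ (i, j) = B $$ (i, j)" using A B ij
    by (simp add: index_mult_mat_vec scalar_prod_right_unit)
qed (use A B in auto)

lemma quadratic_form_sum:
  fixes A :: "real mat"
  assumes "A \<in> carrier_mat n n" and "x \<in> carrier_vec n"
  shows "x \<bullet> (A *\<^sub>v x) = (\<Sum>k<n. \<Sum>l<n. x$k * A$$(k,l) * x$l)"
  using assms by (simp add: scalar_prod_def row_def lessThan_atLeast0 sum_distrib_left mult.assoc)

lemma quadratic_form_smult:
  fixes A :: "real mat"
  assumes "A \<in> carrier_mat n n" and "x \<in> carrier_vec n"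
  shows "(a \<cdot>\<^sub>v x) \<bullet> (A *\<^sub>v (a \<cdot>\<^sub>v x)) = a^2 * (x \<bullet> (A *\<^sub>v x))"
  using assms by (simp add: mult_mat_vec[of A n n] scalar_prod_smult_distrib[of _ n]
      smult_scalar_prod_distrib[of _ n] power2_eq_square)

lemma symmetric_bilinear_form_commute:
  fixes A :: "real mat"
  assumes A: "A \<in> carrier_mat n n" and sym: "A\<^sup>T = A"
    and x: "x \<in> carrier_vec n" and y: "y \<in> carrier_vec n"
  shows "x \<bullet> (A *\<^sub>v y) = y \<bullet> (A *\<^sub>v x)"
proof -
  have "x \<bullet> (A *\<^sub>v y) = (A\<^sup>T *\<^sub>v x) \<bullet> y" using transpose_vec_mult_scalar[OF A y x] by simp
  also have "\<dots> = y \<bullet> (A *\<^sub>v x)" unfolding sym using A x y by (simp add: comm_scalar_prod[of _ n])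
  finally show ?thesis .
qed

text \<open>A positive semidefinite form vanishes only on the kernel: otherwise moving from \<open>x\<close>
  a little in the direction \<open>-A x\<close> would make it negative.\<close>

lemma psd_quadratic_form_eq_0_imp_kernel:
  fixes A :: "real mat"
  assumes A: "A \<in> carrier_mat n n" and sym: "A\<^sup>T = A"
    and psd: "\<And>z. z \<in> carrier_vec n \<Longrightarrow> 0 \<le> z \<bullet> (A *\<^sub>v z)"
    and x: "x \<in> carrier_vec n" and x0: "x \<bullet> (A *\<^sub>v x) = 0"
  shows "A *\<^sub>v x = 0\<^sub>v n"
proof -
  define y where "y = A *\<^sub>v x"
  have y: "y \<in> carrier_vec n" unfolding y_def using A x by simp
  define b where "b = y \<bullet> y"
  define q where "q = y \<bullet> (A *\<^sub>v y)"
  have q: "0 \<le> q" unfolding q_def by (rule psd[OF y])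
  have expand: "(x + t \<cdot>\<^sub>v y) \<bullet> (A *\<^sub>v (x + t \<cdot>\<^sub>v y)) = 2 * t * b + t^2 * q" for t
  proof -
    have "(x + t \<cdot>\<^sub>v y) \<bullet> (A *\<^sub>v (x + t \<cdot>\<^sub>v y))
       = x \<bullet> (A *\<^sub>v x) + t * (x \<bullet> (A *\<^sub>v y)) + t * (y \<bullet> (A *\<^sub>v x)) + t * t * q"
      using A x y unfolding q_def
      by (simp add: mult_add_distrib_mat_vec[of A n n] mult_mat_vec[of A n n]
          scalar_prod_add_distrib[of _ n] add_scalar_prod_distrib[of _ n]
          scalar_prod_smult_distrib[of _ n] smult_scalar_prod_distrib[of _ n] algebra_simps)
    also have "x \<bullet> (A *\<^sub>v y) = b"
      unfolding b_def using symmetric_bilinear_form_commute[OF A sym x y] y_def by simp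
    finally show ?thesis using x0 unfolding b_def y_def by (simp add: power2_eq_square algebra_simps)
  qed
  have "b = 0"
  proof (rule ccontr)
    assume "b \<noteq> 0"
    hence b: "0 < b" unfolding b_def using scalar_prod_self_nonneg[of y] by simp
    define t where "t = - b / (q + 1)"
    have "0 \<le> 2 * t * b + t^2 * q" using psd[of "x + t \<cdot>\<^sub>v y"] x y expand[of t] by simp
    also have "\<dots> = - (b * b) * (q + 2) / (q + 1)^2"
      unfolding t_def using q by (simp add: divide_simps power2_eq_square) (simp add: algebra_simps)
    also have "\<dots> < 0" using b q by (intro divide_neg_pos mult_neg_pos) auto
    finally show False by simp
  qed
  thus ?thesis using scalar_prod_self_eq_0_iff[OF y] unfolding b_def y_def by simp
qed

section \<open>Spectral theorem for real symmetric matrices\<close>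

lemma real_symmetric_mat_hermitian_form_real:
  fixes A :: "real mat" and x :: "complex vec"
  assumes A: "A \<in> carrier_mat n n" and sym: "A\<^sup>T = A" and x: "x \<in> carrier_vec n"
  shows "Im (\<Sum>j<n. cnj (x$j) * (map_mat complex_of_real A *\<^sub>v x)$j) = 0"
proof -
  define s where "s = (\<Sum>j<n. cnj (x$j) * (map_mat complex_of_real A *\<^sub>v x)$j)"
  have Ax: "(map_mat complex_of_real A *\<^sub>v x)$j = (\<Sum>k<n. of_real (A$$(j,k)) * x$k)" if "j < n" for j
    using that A x by (auto simp: scalar_prod_def row_def lessThan_atLeast0)
  have symA: "A$$(j,k) = A$$(k,j)" if "j < n" "k < n" for j k
    using sym A that by (metis carrier_matD index_transpose_mat(1))
  have "cnj s = (\<Sum>j<n. \<Sum>k<n. x$j * of_real (A$$(j,k)) * cnj (x$k))"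
    unfolding s_def by (simp add: Ax sum_distrib_left mult.assoc)
  also have "\<dots> = (\<Sum>k<n. \<Sum>j<n. x$j * of_real (A$$(j,k)) * cnj (x$k))"
    by (rule sum.swap)
  also have "\<dots> = s" unfolding s_def by (simp add: Ax sum_distrib_left symA algebra_simps)
  finally show ?thesis unfolding s_def[symmetric] by (metis cnj.simps(2) complex.expand neg_equal_zero)
qed

lemma real_symmetric_mat_has_eigenvector:
  fixes A :: "real mat"
  assumes A: "A \<in> carrier_mat n n" and sym: "A\<^sup>T = A" and n: "0 < n"
  shows "\<exists>e v. v \<in> carrier_vec n \<and> v \<noteq> 0\<^sub>v n \<and> A *\<^sub>v v = e \<cdot>\<^sub>v v"
proof -
  define Ac where "Ac = map_mat complex_of_real A"
  have Ac: "Ac \<in> carrier_mat n n" using A by (simp add: Ac_def)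
  have cp: "char_poly Ac = map_poly of_real (char_poly A)"
    unfolding Ac_def by (rule of_real_hom.char_poly_hom[OF A])
  have "degree (char_poly Ac) = n" using degree_monic_char_poly[OF Ac] by simp
  hence "\<not> constant (poly (char_poly Ac))" using n by (simp add: constant_degree)
  then obtain z where z: "poly (char_poly Ac) z = 0" using fundamental_theorem_of_algebra by blast
  hence "eigenvalue Ac z" using eigenvalue_root_char_poly[OF Ac] by simp
  then obtain x where x: "x \<in> carrier_vec n" "x \<noteq> 0\<^sub>v n" "Ac *\<^sub>v x = z \<cdot>\<^sub>v x"
    unfolding eigenvalue_def eigenvector_def using Ac by auto
  have norm: "(\<Sum>j<n. cnj (x$j) * x$j) = of_real (\<Sum>j<n. (cmod (x$j))^2)"
    unfolding of_real_sum by (intro sum.cong refl) (metis complex_norm_square mult.commute)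
  obtain j where j: "j < n" "x$j \<noteq> 0"
    using x(1,2) by (metis carrier_vecD eq_vecI index_zero_vec(1) index_zero_vec(2))
  have "(cmod (x$j))^2 \<le> (\<Sum>j<n. (cmod (x$j))^2)" by (rule member_le_sum) (use j in auto)
  moreover have "0 < (cmod (x$j))^2" using j by simp
  ultimately have pos: "0 < (\<Sum>j<n. (cmod (x$j))^2)" by linarith
  have "(\<Sum>j<n. cnj (x$j) * (Ac *\<^sub>v x)$j) = z * of_real (\<Sum>j<n. (cmod (x$j))^2)"
    using x(1,3) unfolding norm[symmetric] by (auto simp: sum_distrib_left algebra_simps intro!: sum.cong)
  hence "Im z * (\<Sum>j<n. (cmod (x$j))^2) = 0"
    using real_symmetric_mat_hermitian_form_real[OF A sym x(1)] unfolding Ac_def by simp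
  hence "z = of_real (Re z)" using pos by (simp add: complex_eq_iff)
  hence "of_real (poly (char_poly A) (Re z)) = (0::complex)"
    using z unfolding cp of_real_hom.poly_map_poly[symmetric] by metis
  hence "eigenvalue A (Re z)" using eigenvalue_root_char_poly[OF A] by simp
  then show ?thesis unfolding eigenvalue_def eigenvector_def using A by auto
qed

definition householder_mat :: "nat \<Rightarrow> real vec \<Rightarrow> real mat" where
  "householder_mat n w = mat n n (\<lambda>(i,j). (if i = j then 1 else 0) - 2 / (w \<bullet> w) * w$i * w$j)"

lemma householder_mat_carrier[simp]: "householder_mat n w \<in> carrier_mat n n"
  unfolding householder_mat_def by simp

lemma householder_mat_symmetric: "(householder_mat n w)\<^sup>T = householder_mat n w"
  unfolding householder_mat_def by (intro eq_matI) auto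

lemma identity_minus_rank_one_mult_vec:
  fixes w x :: "real vec"
  assumes w: "w \<in> carrier_vec n" and x: "x \<in> carrier_vec n"
  shows "mat n n (\<lambda>(i,j). (if i = j then 1 else 0) - c * w$i * w$j) *\<^sub>v x = x - (c * (w \<bullet> x)) \<cdot>\<^sub>v w"
proof (rule eq_vecI)
  fix i assume "i < dim_vec (x - (c * (w \<bullet> x)) \<cdot>\<^sub>v w)"
  hence i: "i < n" using w by simp
  have "(mat n n (\<lambda>(i,j). (if i = j then 1 else 0) - c * w$i * w$j) *\<^sub>v x) $ i
      = (\<Sum>j<n. ((if i = j then 1 else 0) - c * w$i * w$j) * x$j)"
    using i x by (simp add: scalar_prod_def row_def lessThan_atLeast0)
  also have "\<dots> = (\<Sum>j<n. (if i = j then x$j else 0) - c * w$i * (w$j * x$j))"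
    by (intro sum.cong) (auto simp: algebra_simps)
  also have "\<dots> = x$i - c * w$i * (\<Sum>j<n. w$j * x$j)"
    using i by (simp add: sum_subtractf sum_distrib_left)
  finally show "(mat n n (\<lambda>(i,j). (if i = j then 1 else 0) - c * w$i * w$j) *\<^sub>v x) $ i
      = (x - (c * (w \<bullet> x)) \<cdot>\<^sub>v w) $ i"
    using i x w by (simp add: scalar_prod_def lessThan_atLeast0)
qed (use x w in simp)

lemma householder_mat_mult_vec:
  "w \<in> carrier_vec n \<Longrightarrow> x \<in> carrier_vec n \<Longrightarrow>
    householder_mat n w *\<^sub>v x = x - (2 / (w \<bullet> w) * (w \<bullet> x)) \<cdot>\<^sub>v w"
  unfolding householder_mat_def by (rule identity_minus_rank_one_mult_vec)

lemma householder_mat_involution: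
  assumes w: "w \<in> carrier_vec n" "w \<noteq> 0\<^sub>v n"
  shows "householder_mat n w * householder_mat n w = 1\<^sub>m n"
proof (rule eq_mat_via_mult_vec)
  have ww: "w \<bullet> w \<noteq> 0" using scalar_prod_self_eq_0_iff[OF w(1)] w(2) by simp
  fix x :: "real vec" assume x: "x \<in> carrier_vec n"
  define y where "y = householder_mat n w *\<^sub>v x"
  have y: "y \<in> carrier_vec n" unfolding y_def by (rule mult_mat_vec_carrier[OF householder_mat_carrier x])
  have "w \<bullet> y = - (w \<bullet> x)" unfolding y_def householder_mat_mult_vec[OF w(1) x]
    using w x ww by (simp add: scalar_prod_minus_distrib scalar_prod_smult_distrib)
  hence "householder_mat n w *\<^sub>v y = x"
    unfolding householder_mat_mult_vec[OF w(1) y] unfolding y_def householder_mat_mult_vec[OF w(1) x]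
    by (rule_tac eq_vecI) (use w x in auto)
  thus "householder_mat n w * householder_mat n w *\<^sub>v x = 1\<^sub>m n *\<^sub>v x"
    unfolding y_def using x by (simp add: assoc_mult_mat_vec[of _ n n _ n])
qed (use mult_carrier_mat[OF householder_mat_carrier householder_mat_carrier] in auto)

lemma householder_reflection_to_unit_vec:
  fixes v :: "real vec"
  assumes v: "v \<in> carrier_vec n" "v \<bullet> v = 1" and n: "0 < n"
  shows "\<exists>H. H \<in> carrier_mat n n \<and> H\<^sup>T = H \<and> H * H = 1\<^sub>m n \<and> H *\<^sub>v unit_vec n 0 = v"
proof (cases "v = unit_vec n 0")
  case True
  then show ?thesis by (intro exI[of _ "1\<^sub>m n"]) simp
next
  case False
  define e :: "real vec" where "e = unit_vec n 0"
  have e: "e \<in> carrier_vec n" "e \<bullet> e = 1" "v \<bullet> e = v $ 0" "e \<bullet> v = v $ 0"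
    unfolding e_def using n v by (auto simp: scalar_prod_right_unit scalar_prod_left_unit)
  define w where "w = v - e"
  have w: "w \<in> carrier_vec n" unfolding w_def using v e by simp
  have "v = w + e" unfolding w_def by (intro eq_vecI) (use v e in auto)
  hence w0: "w \<noteq> 0\<^sub>v n" using False e(1) unfolding e_def by auto
  have "w \<bullet> w = v \<bullet> v - v \<bullet> e - (e \<bullet> v - e \<bullet> e)" and "w \<bullet> e = v \<bullet> e - e \<bullet> e"
    unfolding w_def using v e by (simp_all add: minus_scalar_prod_distrib scalar_prod_minus_distrib)
  hence "2 / (w \<bullet> w) * (w \<bullet> e) = -1"
    using w0 scalar_prod_self_eq_0_iff[OF w] v e by (simp add: field_simps)
  hence "householder_mat n w *\<^sub>v e = v"
    unfolding householder_mat_mult_vec[OF w e(1)] \<open>v = w + e\<close> using w e by auto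
  thus ?thesis using householder_mat_symmetric householder_mat_involution[OF w w0]
    unfolding e_def by (intro exI[of _ "householder_mat n w"]) auto
qed

definition border_mat :: "'a::comm_ring_1 \<Rightarrow> 'a mat \<Rightarrow> 'a mat" where
  "border_mat a M = mat (Suc (dim_row M)) (Suc (dim_col M))
     (\<lambda>(i,j). if i = 0 \<and> j = 0 then a else if i = 0 \<or> j = 0 then 0 else M $$ (i-1, j-1))"

lemma border_mat_carrier[simp]: "M \<in> carrier_mat n m \<Longrightarrow> border_mat a M \<in> carrier_mat (Suc n) (Suc m)"
  unfolding border_mat_def by auto

lemma border_mat_mult:
  assumes M: "M \<in> carrier_mat n k" and M': "M' \<in> carrier_mat k m"
  shows "border_mat a M * border_mat b M' = border_mat (a * b) (M * M')"
proof (rule eq_matI)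
  fix i j assume "i < dim_row (border_mat (a * b) (M * M'))" "j < dim_col (border_mat (a * b) (M * M'))"
  hence i: "i < Suc n" and j: "j < Suc m" using M M' by (auto simp: border_mat_def)
  have "(border_mat a M * border_mat b M') $$ (i, j) = (\<Sum>l<Suc k. border_mat a M $$ (i,l) * border_mat b M' $$ (l,j))"
    using i j M M' by (auto simp: scalar_prod_def atLeast0LessThan border_mat_def simp del: sum.lessThan_Suc)
  also have "\<dots> = border_mat a M $$ (i,0) * border_mat b M' $$ (0,j)
      + (\<Sum>l<k. border_mat a M $$ (i,Suc l) * border_mat b M' $$ (Suc l,j))"
    by (rule sum.lessThan_Suc_shift)
  also have "\<dots> = border_mat (a * b) (M * M') $$ (i, j)"
    using i j M M' by (cases i; cases j) (auto simp: border_mat_def scalar_prod_def lessThan_atLeast0)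
  finally show "(border_mat a M * border_mat b M') $$ (i, j) = border_mat (a * b) (M * M') $$ (i, j)" .
qed (use M M' in \<open>auto simp: border_mat_def\<close>)

lemma border_mat_transpose: "(border_mat a M)\<^sup>T = border_mat a (M\<^sup>T)"
  unfolding border_mat_def by (intro eq_matI) auto

lemma border_mat_one: "border_mat 1 (1\<^sub>m n) = 1\<^sub>m (Suc n)"
  unfolding border_mat_def by (intro eq_matI) auto

lemma border_mat_diag: "border_mat a (mat_diag n d) = mat_diag (Suc n) (\<lambda>i. if i = 0 then a else d (i - 1))"
  unfolding border_mat_def mat_diag_def by (intro eq_matI) auto

text \<open>Conjugating by a Householder reflection that moves \<open>e\<^sub>0\<close> to a unit eigenvector splits
  off that eigenvector.\<close>

lemma real_symmetric_mat_deflation: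
  fixes A :: "real mat"
  assumes A: "A \<in> carrier_mat (Suc m) (Suc m)" and sym: "A\<^sup>T = A"
  shows "\<exists>H e A'. H \<in> carrier_mat (Suc m) (Suc m) \<and> H\<^sup>T = H \<and> H * H = 1\<^sub>m (Suc m) \<and>
    A' \<in> carrier_mat m m \<and> A'\<^sup>T = A' \<and> H * A * H = border_mat e A'"
proof -
  let ?n = "Suc m"
  obtain e v0 where v0: "v0 \<in> carrier_vec ?n" "v0 \<noteq> 0\<^sub>v ?n" "A *\<^sub>v v0 = e \<cdot>\<^sub>v v0"
    using real_symmetric_mat_has_eigenvector[OF A sym] by auto
  have pos: "0 < v0 \<bullet> v0" using scalar_prod_self_pos_iff[OF v0(1)] v0(2) by simp
  define v where "v = (1 / sqrt (v0 \<bullet> v0)) \<cdot>\<^sub>v v0"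
  have v: "v \<in> carrier_vec ?n" "v \<bullet> v = 1" unfolding v_def using v0(1) pos
    by (simp_all add: scalar_prod_smult_distrib smult_scalar_prod_distrib[OF v0(1) v0(1)])
  have Av: "A *\<^sub>v v = e \<cdot>\<^sub>v v" unfolding v_def using v0 A
    by (simp add: mult_mat_vec smult_smult_assoc mult.commute)
  obtain H where H: "H \<in> carrier_mat ?n ?n" "H\<^sup>T = H" "H * H = 1\<^sub>m ?n" "H *\<^sub>v unit_vec ?n 0 = v"
    using householder_reflection_to_unit_vec[OF v] by auto
  define B where "B = H * A * H"
  have B: "B \<in> carrier_mat ?n ?n" unfolding B_def using H A by simp
  have BT: "B\<^sup>T = B"
    unfolding B_def using H A sym
    by (simp add: transpose_mult[of _ ?n ?n _ ?n] assoc_mult_mat[of _ ?n ?n _ ?n _ ?n])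
  have Hv: "H *\<^sub>v v = unit_vec ?n 0" using H
    by (metis assoc_mult_mat_vec one_mult_mat_vec unit_vec_carrier)
  have Be: "B *\<^sub>v unit_vec ?n 0 = e \<cdot>\<^sub>v unit_vec ?n 0"
    unfolding B_def using H A v Av Hv by (simp add: assoc_mult_mat_vec[of _ ?n ?n _ ?n] mult_mat_vec)
  have col0: "B $$ (i, 0) = (if i = 0 then e else 0)" if "i < ?n" for i
  proof -
    have "B $$ (i, 0) = (B *\<^sub>v unit_vec ?n 0) $ i" using B that
      by (simp add: index_mult_mat_vec scalar_prod_right_unit)
    thus ?thesis unfolding Be using that by simp
  qed
  have row0: "B $$ (0, j) = (if j = 0 then e else 0)" if "j < ?n" for j
    using col0[OF that] BT B that by (metis carrier_matD index_transpose_mat(1) zero_less_Suc)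
  define A' where "A' = mat m m (\<lambda>(i,j). B $$ (Suc i, Suc j))"
  have "A'\<^sup>T = A'" unfolding A'_def using BT B
    by (intro eq_matI) (auto, metis Suc_less_eq carrier_matD index_transpose_mat(1))
  moreover have "B = border_mat e A'"
    unfolding border_mat_def A'_def using B col0 row0 by (intro eq_matI) auto
  ultimately show ?thesis using H unfolding B_def by (intro exI[of _ H] exI[of _ e] exI[of _ A']) (simp add: A'_def)
qed

lemma real_symmetric_mat_diagonalizable:
  fixes A :: "real mat"
  assumes "A \<in> carrier_mat n n" and "A\<^sup>T = A"
  shows "\<exists>Q d. Q \<in> carrier_mat n n \<and> Q\<^sup>T * Q = 1\<^sub>m n \<and> Q\<^sup>T * A * Q = mat_diag n d"
  using assms
proof (induction n arbitrary: A)
  case 0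
  thus ?case by (intro exI[of _ "1\<^sub>m 0"] exI[of _ "\<lambda>_. 0"]) (auto simp: mat_diag_def)
next
  case (Suc m)
  let ?n = "Suc m"
  obtain H e A' where H: "H \<in> carrier_mat ?n ?n" "H\<^sup>T = H" "H * H = 1\<^sub>m ?n"
    and A': "A' \<in> carrier_mat m m" "A'\<^sup>T = A'" and HAH: "H * A * H = border_mat e A'"
    using real_symmetric_mat_deflation[OF Suc.prems] by blast
  obtain Q' d where Q': "Q' \<in> carrier_mat m m" "Q'\<^sup>T * Q' = 1\<^sub>m m" "Q'\<^sup>T * A' * Q' = mat_diag m d"
    using Suc.IH[OF A'] by blast
  define Q where "Q = H * border_mat 1 Q'"
  have Q: "Q \<in> carrier_mat ?n ?n" unfolding Q_def using H Q' by simp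
  have QT: "Q\<^sup>T = border_mat 1 Q'\<^sup>T * H"
    unfolding Q_def using H Q' by (simp add: transpose_mult[of _ ?n ?n _ ?n] border_mat_transpose)
  have conj: "Q\<^sup>T * M * Q = border_mat 1 Q'\<^sup>T * (H * M * H) * border_mat 1 Q'" if "M \<in> carrier_mat ?n ?n" for M
    unfolding QT unfolding Q_def using H Q' that by (simp add: assoc_mult_mat[of _ ?n ?n _ ?n _ ?n])
  have Q'T: "border_mat 1 Q'\<^sup>T \<in> carrier_mat ?n ?n" using Q' by simp
  have "Q\<^sup>T * 1\<^sub>m ?n * Q = border_mat 1 Q'\<^sup>T * border_mat 1 Q'"
    unfolding conj[OF one_carrier_mat] using H Q'T by simp
  also have "\<dots> = 1\<^sub>m ?n" using Q' by (simp add: border_mat_mult[of _ m m _ m] border_mat_one)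
  finally have "Q\<^sup>T * Q = 1\<^sub>m ?n" using Q by simp
  moreover have "Q\<^sup>T * A * Q = mat_diag ?n (\<lambda>i. if i = 0 then e else d (i - 1))"
    unfolding conj[OF Suc.prems(1)] HAH using A' Q'
    by (simp add: border_mat_mult[of _ m m _ m] border_mat_diag)
  ultimately show ?case using Q by auto
qed

section \<open>Eigenvalues as Rayleigh quotients\<close>

lemma mat_diag_mult_vec:
  assumes "c \<in> carrier_vec n"
  shows "mat_diag n d *\<^sub>v c = vec n (\<lambda>k. d k * c$k)"
proof (rule eq_vecI)
  fix i assume "i < dim_vec (vec n (\<lambda>k. d k * c$k))"
  hence i: "i < n" by simp
  have "(mat_diag n d *\<^sub>v c) $ i = (\<Sum>j = 0..<n. (if i = j then d j else 0) * c$j)"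
    using i assms by (simp add: mat_diag_def scalar_prod_def row_def)
  also have "\<dots> = (\<Sum>j = 0..<n. if j = i then d i * c$i else 0)" by (intro sum.cong) auto
  finally show "(mat_diag n d *\<^sub>v c) $ i = vec n (\<lambda>k. d k * c$k) $ i" using i by simp
qed (use assms in \<open>simp add: mat_diag_def\<close>)

lemma proots_prod_linear_factors: "proots (\<Prod>a\<leftarrow>xs. [:- a, 1:]) = mset (xs :: real list)"
proof (induction xs)
  case (Cons a xs)
  have "(\<Prod>a\<leftarrow>xs. [:- a, 1:]) \<noteq> (0 :: real poly)" by (subst prod_list_zero_iff) auto
  hence "proots ([:- a, 1:] * (\<Prod>a\<leftarrow>xs. [:- a, 1:])) = proots [:- a, 1:] + proots (\<Prod>a\<leftarrow>xs. [:- a, 1:])"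
    by (intro proots_mult) auto
  thus ?case using Cons by simp
qed simp

lemma sort_map_nth_eqI:
  fixes d :: "nat \<Rightarrow> 'a::linorder"
  assumes below: "card {k. k < n \<and> d k < l} \<le> m" and upto: "m < card {k. k < n \<and> d k \<le> l}"
  shows "sort (map d [0..<n]) ! m = l"
proof -
  let ?s = "sort (map d [0..<n])"
  have count: "card {j. j < n \<and> P (?s ! j)} = card {k. k < n \<and> P (d k)}" for P
  proof -
    have "mset (filter P ?s) = mset (filter P (map d [0..<n]))" by (simp add: mset_filter)
    hence "length (filter P ?s) = length (filter P (map d [0..<n]))" by (metis size_mset)
    moreover have "{j. j < n \<and> P (map d [0..<n] ! j)} = {k. k < n \<and> P (d k)}" by auto
    ultimately show ?thesis by (simp add: length_filter_conv_card)
  qed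
  have "card {k. k < n \<and> d k \<le> l} \<le> n" using card_mono[of "{..<n}" "{k. k < n \<and> d k \<le> l}"] by auto
  hence m: "m < n" using upto by linarith
  have sorted: "sorted ?s" by simp
  have mono: "?s ! i \<le> ?s ! j" if "i \<le> j" "j < n" for i j
    using sorted_nth_mono[OF sorted that(1)] that by simp
  have "\<not> ?s ! m < l"
  proof
    assume "?s ! m < l"
    hence "{..m} \<subseteq> {j. j < n \<and> ?s ! j < l}" using mono[of _ m] m by fastforce
    hence "card {..m} \<le> card {j. j < n \<and> ?s ! j < l}" by (intro card_mono) auto
    thus False using below count[of "\<lambda>x. x < l"] by simp
  qed
  moreover have "\<not> l < ?s ! m"
  proof
    assume "l < ?s ! m"
    have "j < m" if "j < n" "?s ! j \<le> l" for j
      using mono[of m j] that \<open>l < ?s ! m\<close> by (cases "m \<le> j") auto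
    hence "{j. j < n \<and> ?s ! j \<le> l} \<subseteq> {..<m}" by auto
    hence "card {j. j < n \<and> ?s ! j \<le> l} \<le> card {..<m}" by (intro card_mono) auto
    thus False using upto count[of "\<lambda>x. x \<le> l"] by simp
  qed
  ultimately show ?thesis by simp
qed

lemma sum_weighted_squares_pos:
  fixes f c :: "nat \<Rightarrow> real"
  assumes pos: "\<And>k. k < n \<Longrightarrow> c k \<noteq> 0 \<Longrightarrow> 0 < f k" and nz: "\<exists>k<n. c k \<noteq> 0"
  shows "0 < (\<Sum>k<n. f k * (c k)^2)"
proof -
  obtain k where k: "k < n" "c k \<noteq> 0" using nz by blast
  have "0 < f k * (c k)^2" using pos[OF k] k by simp
  also have "\<dots> \<le> (\<Sum>k<n. f k * (c k)^2)"
  proof (rule member_le_sum)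
    show "0 \<le> f j * (c j)^2" if "j \<in> {..<n} - {k}" for j
      using pos[of j] that by (cases "c j = 0") auto
  qed (use k in auto)
  finally show ?thesis .
qed

lemma nontrivial_combination_eq_0: "\<exists>\<alpha> \<beta>::real. (\<alpha> \<noteq> 0 \<or> \<beta> \<noteq> 0) \<and> \<alpha> * a + \<beta> * b = 0"
proof (cases "a = 0 \<and> b = 0")
  case True thus ?thesis by (intro exI[of _ 1] exI[of _ 0]) simp
next
  case False thus ?thesis by (intro exI[of _ b] exI[of _ "- a"]) (auto simp: algebra_simps)
qed

locale eigendecomposition =
  fixes n :: nat and A Q :: "real mat" and d :: "nat \<Rightarrow> real"
  assumes carrier_A: "A \<in> carrier_mat n n" and carrier_Q: "Q \<in> carrier_mat n n"
    and orthogonal: "Q\<^sup>T * Q = 1\<^sub>m n" and diagonal: "Q\<^sup>T * A * Q = mat_diag n d"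
begin

lemma orthogonal_right: "Q * Q\<^sup>T = 1\<^sub>m n"
  using mat_mult_left_right_inverse[OF _ carrier_Q orthogonal] carrier_Q by simp

lemma spectral_decomposition: "A = Q * mat_diag n d * Q\<^sup>T"
proof -
  have "Q * mat_diag n d * Q\<^sup>T = (Q * Q\<^sup>T) * A * (Q * Q\<^sup>T)"
    unfolding diagonal[symmetric] using carrier_Q carrier_A by (simp add: assoc_mult_mat[of _ n n _ n _ n])
  thus ?thesis unfolding orthogonal_right using carrier_A by simp
qed

lemma sorted_eigs_eq: "sorted_eigs A = sort (map d [0..<n])"
proof -
  have "similar_mat A (mat_diag n d)"
    unfolding similar_mat_def similar_mat_wit_def using carrier_A carrier_Q orthogonal orthogonal_right spectral_decomposition
    by (intro exI[of _ Q] exI[of _ "Q\<^sup>T"]) (auto simp: Let_def)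
  hence "char_poly A = char_poly (mat_diag n d)" by (rule char_poly_similar)
  also have "\<dots> = (\<Prod>a\<leftarrow>diag_mat (mat_diag n d). [:- a, 1:])"
    by (rule char_poly_upper_triangular) (auto simp: upper_triangular_def mat_diag_def)
  also have "diag_mat (mat_diag n d) = map d [0..<n]"
    unfolding diag_mat_def mat_diag_def by (intro nth_equalityI) auto
  finally have cp: "char_poly A = (\<Prod>a\<leftarrow>map d [0..<n]. [:- a, 1:])" .
  show ?thesis unfolding sorted_eigs_def cp proots_prod_linear_factors sorted_list_of_multiset_mset ..
qed

lemma coords_inverse: "c \<in> carrier_vec n \<Longrightarrow> Q\<^sup>T *\<^sub>v (Q *\<^sub>v c) = c"
  using carrier_Q orthogonal by (simp add: assoc_mult_mat_vec[symmetric, of "Q\<^sup>T" n n Q n c])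

lemma quadratic_form_coords:
  assumes y: "y \<in> carrier_vec n"
  shows "y \<bullet> (A *\<^sub>v y) = (\<Sum>k<n. d k * ((Q\<^sup>T *\<^sub>v y)$k)^2)"
proof -
  define c where "c = Q\<^sup>T *\<^sub>v y"
  have c: "c \<in> carrier_vec n" unfolding c_def using carrier_Q y by simp
  have "y \<bullet> (A *\<^sub>v y) = y \<bullet> (Q *\<^sub>v (mat_diag n d *\<^sub>v c))"
    unfolding c_def spectral_decomposition using carrier_Q y by (simp add: assoc_mult_mat_vec[of _ n n _ n])
  also have "\<dots> = c \<bullet> (mat_diag n d *\<^sub>v c)"
    using transpose_vec_mult_scalar[OF carrier_Q mult_mat_vec_carrier[OF mat_diag_dim c] y]
    unfolding c_def by simp
  finally show ?thesis unfolding c_def[symmetric] using c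
    by (simp add: mat_diag_mult_vec scalar_prod_def lessThan_atLeast0 power2_eq_square algebra_simps)
qed

lemma norm_coords:
  assumes y: "y \<in> carrier_vec n"
  shows "y \<bullet> y = (\<Sum>k<n. ((Q\<^sup>T *\<^sub>v y)$k)^2)"
proof -
  have "y \<bullet> y = (Q\<^sup>T *\<^sub>v y) \<bullet> (Q\<^sup>T *\<^sub>v y)"
    using transpose_vec_mult_scalar[OF carrier_Q _ y, of "Q\<^sup>T *\<^sub>v y"] carrier_Q y
    by (simp add: assoc_mult_mat_vec[symmetric, of Q n n "Q\<^sup>T" n y] orthogonal_right)
  thus ?thesis using carrier_Q y by (simp add: scalar_prod_def lessThan_atLeast0 power2_eq_square)
qed

lemma rayleigh_gap_coords:
  "y \<in> carrier_vec n \<Longrightarrow> y \<bullet> (A *\<^sub>v y) - l * (y \<bullet> y) = (\<Sum>k<n. (d k - l) * ((Q\<^sup>T *\<^sub>v y)$k)^2)"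
  by (simp add: quadratic_form_coords norm_coords sum_distrib_left sum_subtractf left_diff_distrib)

lemma rayleigh_quotient_of_eigenvector:
  assumes k: "k < n"
  shows "(Q *\<^sub>v unit_vec n k) \<bullet> (A *\<^sub>v (Q *\<^sub>v unit_vec n k)) = d k"
    and "(Q *\<^sub>v unit_vec n k) \<bullet> (Q *\<^sub>v unit_vec n k) = 1"
proof -
  have "(\<Sum>j<n. f j * ((unit_vec n k)$j)^2) = f k" for f :: "nat \<Rightarrow> real"
  proof -
    have "(\<Sum>j<n. f j * ((unit_vec n k)$j)^2) = (\<Sum>j<n. if j = k then f k else 0)"
      by (intro sum.cong) (auto simp: unit_vec_def)
    thus ?thesis using k by simp
  qed
  from this[of d] this[of "\<lambda>_. 1"] show "(Q *\<^sub>v unit_vec n k) \<bullet> (A *\<^sub>v (Q *\<^sub>v unit_vec n k)) = d k"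
    and "(Q *\<^sub>v unit_vec n k) \<bullet> (Q *\<^sub>v unit_vec n k) = 1"
    using carrier_Q by (simp_all add: quadratic_form_coords norm_coords coords_inverse)
qed

lemma sorted_eigs_last_eq:
  assumes n: "0 < n" and le: "\<And>y. y \<in> carrier_vec n \<Longrightarrow> y \<bullet> (A *\<^sub>v y) \<le> l * (y \<bullet> y)"
    and x: "x \<in> carrier_vec n" "x \<noteq> 0\<^sub>v n" and eq: "x \<bullet> (A *\<^sub>v x) = l * (x \<bullet> x)"
  shows "sorted_eigs A ! (n - 1) = l"
proof -
  have d_le: "d k \<le> l" if "k < n" for k
    using le[of "Q *\<^sub>v unit_vec n k"] rayleigh_quotient_of_eigenvector[OF that] carrier_Q by simp
  have "\<exists>k<n. d k = l"
  proof (rule ccontr)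
    assume "\<not> ?thesis"
    hence "0 < (\<Sum>k<n. (l - d k) * ((Q\<^sup>T *\<^sub>v x)$k)^2)"
      using d_le by (intro sum_weighted_squares_pos) (use x norm_coords[OF x(1)]
          scalar_prod_self_eq_0_iff[OF x(1)] in \<open>auto simp: order.order_iff_strict\<close>)
    thus False using rayleigh_gap_coords[OF x(1), of l] eq
      by (simp add: sum_subtractf left_diff_distrib)
  qed
  then obtain k where "k < n" "d k = l" by blast
  hence "{k. k < n \<and> d k < l} \<subseteq> {..<n} - {k}" by auto
  hence "card {k. k < n \<and> d k < l} \<le> n - 1" using \<open>k < n\<close> by (metis card_Diff_singleton card_lessThan card_mono finite_Diff finite_lessThan lessThan_iff)
  moreover have "{k. k < n \<and> d k \<le> l} = {..<n}" using d_le by auto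
  ultimately show ?thesis unfolding sorted_eigs_eq using n by (intro sort_map_nth_eqI) auto
qed

end

lemma symmetric_mat_eigendecomposition:
  assumes "A \<in> carrier_mat n n" and "A\<^sup>T = A"
  shows "\<exists>Q d. eigendecomposition n A Q d"
  using real_symmetric_mat_diagonalizable[OF assms] assms(1) unfolding eigendecomposition_def by blast

context eigendecomposition
begin

lemma card_eigenvalues_less_le_1:
  assumes b: "b \<in> carrier_vec n"
    and ge: "\<And>y. y \<in> carrier_vec n \<Longrightarrow> y \<bullet> b = 0 \<Longrightarrow> l * (y \<bullet> y) \<le> y \<bullet> (A *\<^sub>v y)"
  shows "card {k. k < n \<and> d k < l} \<le> 1"
proof (rule ccontr)
  assume "\<not> ?thesis"
  then obtain k1 k2 where k: "k1 < n" "k2 < n" "k1 \<noteq> k2" "d k1 < l" "d k2 < l"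
    using card_le_Suc0_iff_eq[of "{k. k < n \<and> d k < l}"] by auto
  define c where "c = Q\<^sup>T *\<^sub>v b"
  have c: "c \<in> carrier_vec n" unfolding c_def using carrier_Q b by simp
  obtain \<alpha> \<beta> where ab: "\<alpha> \<noteq> 0 \<or> \<beta> \<noteq> 0" "\<alpha> * c$k1 + \<beta> * c$k2 = 0"
    using nontrivial_combination_eq_0 by blast
  define \<gamma> where "\<gamma> = \<alpha> \<cdot>\<^sub>v unit_vec n k1 + \<beta> \<cdot>\<^sub>v unit_vec n k2"
  have \<gamma>: "\<gamma> \<in> carrier_vec n" unfolding \<gamma>_def by simp
  define y where "y = Q *\<^sub>v \<gamma>"
  have y: "y \<in> carrier_vec n" unfolding y_def using carrier_Q \<gamma> by simp
  have "y \<bullet> b = b \<bullet> y" using comm_scalar_prod[OF y b] .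
  also have "\<dots> = c \<bullet> \<gamma>"
    unfolding y_def c_def using transpose_vec_mult_scalar[OF carrier_Q \<gamma> b] by simp
  also have "\<dots> = 0" unfolding \<gamma>_def using k c ab(2)
    by (simp add: scalar_prod_add_distrib[of _ n] scalar_prod_smult_distrib[of _ n] scalar_prod_right_unit)
  finally have "l * (y \<bullet> y) \<le> y \<bullet> (A *\<^sub>v y)" by (rule ge[OF y])
  moreover have "0 < (\<Sum>k<n. (l - d k) * (\<gamma>$k)^2)"
    using k ab(1) by (intro sum_weighted_squares_pos) (auto simp: \<gamma>_def split: if_splits)
  ultimately show False using rayleigh_gap_coords[OF y, of l] unfolding y_def coords_inverse[OF \<gamma>]
    by (simp add: sum_subtractf left_diff_distrib)
qed

lemma two_le_card_eigenvalues_le: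
  assumes x: "x1 \<in> carrier_vec n" "x2 \<in> carrier_vec n"
    and indep: "\<And>\<alpha> \<beta>. \<alpha> \<cdot>\<^sub>v x1 + \<beta> \<cdot>\<^sub>v x2 = 0\<^sub>v n \<Longrightarrow> \<alpha> = 0 \<and> \<beta> = 0"
    and le: "\<And>\<alpha> \<beta>. let y = \<alpha> \<cdot>\<^sub>v x1 + \<beta> \<cdot>\<^sub>v x2 in y \<bullet> (A *\<^sub>v y) \<le> l * (y \<bullet> y)"
  shows "2 \<le> card {k. k < n \<and> d k \<le> l}"
proof (rule ccontr)
  assume "\<not> ?thesis"
  hence "card {k. k < n \<and> d k \<le> l} \<le> Suc 0" by simp
  hence "\<forall>k\<in>{k. k < n \<and> d k \<le> l}. \<forall>k'\<in>{k. k < n \<and> d k \<le> l}. k = k'"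
    by (subst card_le_Suc0_iff_eq[symmetric]) auto
  then obtain k0 where k0: "\<And>k. k < n \<Longrightarrow> d k \<le> l \<Longrightarrow> k = k0" by blast
  obtain \<alpha> \<beta> where ab: "\<alpha> \<noteq> 0 \<or> \<beta> \<noteq> 0" "\<alpha> * (Q\<^sup>T *\<^sub>v x1)$k0 + \<beta> * (Q\<^sup>T *\<^sub>v x2)$k0 = 0"
    using nontrivial_combination_eq_0 by blast
  define y where "y = \<alpha> \<cdot>\<^sub>v x1 + \<beta> \<cdot>\<^sub>v x2"
  have y: "y \<in> carrier_vec n" "y \<noteq> 0\<^sub>v n" unfolding y_def using x indep ab(1) by auto
  define c where "c = Q\<^sup>T *\<^sub>v y"
  have c: "c = \<alpha> \<cdot>\<^sub>v (Q\<^sup>T *\<^sub>v x1) + \<beta> \<cdot>\<^sub>v (Q\<^sup>T *\<^sub>v x2)"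
    unfolding c_def y_def using carrier_Q x by (simp add: mult_add_distrib_mat_vec[of _ n n] mult_mat_vec[of _ n n])
  have "c $ k = 0" if "k = k0" "k < n" for k unfolding c using that ab(2) carrier_Q x by simp
  hence "0 < (\<Sum>k<n. (d k - l) * (c$k)^2)"
  proof (intro sum_weighted_squares_pos)
    show "\<exists>k<n. c$k \<noteq> 0"
      using norm_coords[OF y(1)] scalar_prod_self_eq_0_iff[OF y(1)] y(2) unfolding c_def
      by (metis (no_types, lifting) lessThan_iff power_zero_numeral sum.neutral)
  qed (use k0 in force)
  thus False using le[of \<alpha> \<beta>] rayleigh_gap_coords[OF y(1), of l] unfolding c_def y_def Let_def by simp
qed

lemma sorted_eigs_second_eq:
  assumes "b \<in> carrier_vec n"
    and "\<And>y. y \<in> carrier_vec n \<Longrightarrow> y \<bullet> b = 0 \<Longrightarrow> l * (y \<bullet> y) \<le> y \<bullet> (A *\<^sub>v y)"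
    and "x1 \<in> carrier_vec n" "x2 \<in> carrier_vec n"
    and "\<And>\<alpha> \<beta>. \<alpha> \<cdot>\<^sub>v x1 + \<beta> \<cdot>\<^sub>v x2 = 0\<^sub>v n \<Longrightarrow> \<alpha> = 0 \<and> \<beta> = 0"
    and "\<And>\<alpha> \<beta>. let y = \<alpha> \<cdot>\<^sub>v x1 + \<beta> \<cdot>\<^sub>v x2 in y \<bullet> (A *\<^sub>v y) \<le> l * (y \<bullet> y)"
  shows "sorted_eigs A ! 1 = l"
  unfolding sorted_eigs_eq
  using card_eigenvalues_less_le_1[OF assms(1,2)] two_le_card_eigenvalues_le[OF assms(3-6)]
  by (intro sort_map_nth_eqI) auto

lemma gram_factorization:
  assumes psd: "\<And>y. y \<in> carrier_vec n \<Longrightarrow> 0 \<le> y \<bullet> (A *\<^sub>v y)"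
  shows "\<exists>u. (\<forall>i<n. u i \<in> carrier_vec n) \<and> (\<forall>i<n. \<forall>j<n. u i \<bullet> u j = A $$ (i,j))"
proof -
  have d: "0 \<le> d r" if "r < n" for r
    using psd[of "Q *\<^sub>v unit_vec n r"] rayleigh_quotient_of_eigenvector[OF that] carrier_Q by simp
  define u where "u = (\<lambda>i. vec n (\<lambda>r. Q $$ (i, r) * sqrt (d r)))"
  have "u i \<bullet> u j = A $$ (i,j)" if ij: "i < n" "j < n" for i j
  proof -
    have "A $$ (i,j) = (\<Sum>r<n. Q $$ (i,r) * d r * Q $$ (j,r))"
      unfolding spectral_decomposition using carrier_Q ij
      by (simp add: mat_diag_mult_right[of Q n n] scalar_prod_def lessThan_atLeast0)
    also have "\<dots> = u i \<bullet> u j"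
      unfolding u_def using d by (simp add: scalar_prod_def lessThan_atLeast0)
        (intro sum.cong, auto simp: algebra_simps real_sqrt_mult[symmetric])
    finally show ?thesis by simp
  qed
  thus ?thesis by (intro exI[of _ u]) (simp add: u_def)
qed

end

lemma psd_gram_factorization:
  fixes A :: "real mat"
  assumes "A \<in> carrier_mat n n" "A\<^sup>T = A" and "\<And>y. y \<in> carrier_vec n \<Longrightarrow> 0 \<le> y \<bullet> (A *\<^sub>v y)"
  shows "\<exists>u. (\<forall>i<n. u i \<in> carrier_vec n) \<and> (\<forall>i<n. \<forall>j<n. u i \<bullet> u j = A $$ (i,j))"
  using symmetric_mat_eigendecomposition[OF assms(1,2)] eigendecomposition.gram_factorization assms(3)
  by blast

lemma smult_mat_mult_vec:
  fixes A :: "'a::comm_ring_1 mat"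
  assumes "A \<in> carrier_mat nr n" and "x \<in> carrier_vec n"
  shows "(c \<cdot>\<^sub>m A) *\<^sub>v x = c \<cdot>\<^sub>v (A *\<^sub>v x)"
  using assms by (intro eq_vecI) (auto simp: scalar_prod_def sum_distrib_left algebra_simps)

lemma ones_mat_mult_vec: "x \<in> carrier_vec n \<Longrightarrow> ones_mat n *\<^sub>v x = vec n (\<lambda>_. \<Sum>k<n. x$k)"
  by (rule eq_vecI) (auto simp: ones_mat_def scalar_prod_def row_def lessThan_atLeast0)

lemma nsd_shift_iff:
  fixes A :: "real mat"
  assumes A: "A \<in> carrier_mat n n"
  shows "nsd (A - c \<cdot>\<^sub>m 1\<^sub>m n) \<longleftrightarrow> (\<forall>x\<in>carrier_vec n. x \<bullet> (A *\<^sub>v x) \<le> c * (x \<bullet> x))"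
proof -
  have "x \<bullet> ((A - c \<cdot>\<^sub>m 1\<^sub>m n) *\<^sub>v x) = x \<bullet> (A *\<^sub>v x) - c * (x \<bullet> x)" if x: "x \<in> carrier_vec n" for x
    using A x by (simp add: minus_mult_distrib_mat_vec smult_mat_mult_vec[of _ n n]
        scalar_prod_minus_distrib[of _ n] scalar_prod_smult_distrib[of _ n])
  thus ?thesis unfolding nsd_def using A by auto
qed

lemma psd_shift_iff:
  fixes A :: "real mat"
  assumes A: "A \<in> carrier_mat n n"
  shows "psd (A + m \<cdot>\<^sub>m ones_mat n - c \<cdot>\<^sub>m 1\<^sub>m n) \<longleftrightarrow>
     (\<forall>x\<in>carrier_vec n. c * (x \<bullet> x) \<le> x \<bullet> (A *\<^sub>v x) + m * (\<Sum>k<n. x$k)^2)"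
proof -
  have "x \<bullet> ((A + m \<cdot>\<^sub>m ones_mat n - c \<cdot>\<^sub>m 1\<^sub>m n) *\<^sub>v x) = x \<bullet> (A *\<^sub>v x) + m * (\<Sum>k<n. x$k)^2 - c * (x \<bullet> x)"
    if x: "x \<in> carrier_vec n" for x
  proof -
    have "x \<bullet> vec n (\<lambda>_. \<Sum>k<n. x$k) = (\<Sum>k<n. x$k)^2"
      using x by (simp add: scalar_prod_def lessThan_atLeast0 power2_eq_square sum_distrib_right)
    moreover have "ones_mat n \<in> carrier_mat n n" by (simp add: ones_mat_def)
    ultimately show ?thesis using A x
      by (simp add: minus_mult_distrib_mat_vec[of _ n n] add_mult_distrib_mat_vec[of _ n n]
          smult_mat_mult_vec[of _ n n] ones_mat_mult_vec scalar_prod_minus_distrib[of _ n]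
          scalar_prod_add_distrib[of _ n] scalar_prod_smult_distrib[of _ n])
  qed
  thus ?thesis unfolding psd_def using A by (auto simp: ones_mat_def)
qed

lemma transpose_smult_mat: "(c \<cdot>\<^sub>m A)\<^sup>T = c \<cdot>\<^sub>m A\<^sup>T"
  by (intro eq_matI) auto

lemma transpose_ones_mat: "(ones_mat n)\<^sup>T = ones_mat n"
  unfolding ones_mat_def by (intro eq_matI) auto

lemma minus_vec_eq_0_imp_eq:
  fixes a b :: "'a::ab_group_add vec"
  assumes "a \<in> carrier_vec n" "b \<in> carrier_vec n" "a - b = 0\<^sub>v n"
  shows "a = b"
proof (rule eq_vecI)
  fix i assume "i < dim_vec b"
  hence "(a - b) $ i = 0" using assms by simp
  thus "a $ i = b $ i" using \<open>i < dim_vec b\<close> assms(1,2) by simp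
qed (use assms in simp)

lemma nsd_shift_rayleigh_eq_imp_eigenvector:
  fixes A :: "real mat"
  assumes A: "A \<in> carrier_mat n n" and sym: "A\<^sup>T = A" and nsd: "nsd (A - c \<cdot>\<^sub>m 1\<^sub>m n)"
    and x: "x \<in> carrier_vec n" and eq: "x \<bullet> (A *\<^sub>v x) = c * (x \<bullet> x)"
  shows "A *\<^sub>v x = c \<cdot>\<^sub>v x"
proof -
  define M where "M = c \<cdot>\<^sub>m 1\<^sub>m n - A"
  have M: "M \<in> carrier_mat n n" unfolding M_def using A by (rule minus_carrier_mat)
  have Mv: "M *\<^sub>v z = c \<cdot>\<^sub>v z - A *\<^sub>v z" if "z \<in> carrier_vec n" for z
    unfolding M_def using A that by (simp add: minus_mult_distrib_mat_vec[of _ n n] smult_mat_mult_vec[of _ n n])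
  have form: "z \<bullet> (M *\<^sub>v z) = c * (z \<bullet> z) - z \<bullet> (A *\<^sub>v z)" if "z \<in> carrier_vec n" for z
    using A that by (simp add: Mv scalar_prod_minus_distrib[of _ n] scalar_prod_smult_distrib[of _ n])
  have "M\<^sup>T = M" unfolding M_def using A sym by (simp add: transpose_minus[of _ n n] transpose_smult_mat)
  moreover have "0 \<le> z \<bullet> (M *\<^sub>v z)" if "z \<in> carrier_vec n" for z
    using nsd that unfolding nsd_shift_iff[OF A] form[OF that] by simp
  moreover have "x \<bullet> (M *\<^sub>v x) = 0" using form[OF x] eq by simp
  ultimately have "M *\<^sub>v x = 0\<^sub>v n" using psd_quadratic_form_eq_0_imp_kernel[OF M _ _ x] by blast
  hence "c \<cdot>\<^sub>v x - A *\<^sub>v x = 0\<^sub>v n" using Mv[OF x] by simp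
  hence "c \<cdot>\<^sub>v x = A *\<^sub>v x" by (rule minus_vec_eq_0_imp_eq[rotated 2]) (use A x in simp_all)
  thus ?thesis by simp
qed

lemma psd_shift_rayleigh_eq_imp_eigenvector:
  fixes A :: "real mat"
  assumes A: "A \<in> carrier_mat n n" and sym: "A\<^sup>T = A" and psd: "psd (A + m \<cdot>\<^sub>m ones_mat n - c \<cdot>\<^sub>m 1\<^sub>m n)"
    and x: "x \<in> carrier_vec n" and sx: "(\<Sum>k<n. x$k) = 0" and eq: "x \<bullet> (A *\<^sub>v x) = c * (x \<bullet> x)"
  shows "A *\<^sub>v x = c \<cdot>\<^sub>v x"
proof -
  define M where "M = A + m \<cdot>\<^sub>m ones_mat n - c \<cdot>\<^sub>m 1\<^sub>m n"
  have J: "ones_mat n \<in> carrier_mat n n" by (simp add: ones_mat_def)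
  have M: "M \<in> carrier_mat n n" unfolding M_def by (intro minus_carrier_mat) simp
  have "M\<^sup>T = M" unfolding M_def using A J sym
    by (simp add: transpose_minus[of _ n n] transpose_add[of _ n n] transpose_smult_mat transpose_ones_mat)
  have "ones_mat n *\<^sub>v x = 0\<^sub>v n" using x sx by (simp add: ones_mat_mult_vec zero_vec_def)
  moreover have "m \<cdot>\<^sub>v 0\<^sub>v n = (0\<^sub>v n :: real vec)" by (intro eq_vecI) auto
  ultimately have Mx: "M *\<^sub>v x = A *\<^sub>v x - c \<cdot>\<^sub>v x"
    unfolding M_def using A J x
    by (simp add: minus_mult_distrib_mat_vec[of _ n n] add_mult_distrib_mat_vec[of _ n n]
        smult_mat_mult_vec[of _ n n])
  have "x \<bullet> (M *\<^sub>v x) = 0"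
    unfolding Mx using A x eq by (simp add: scalar_prod_minus_distrib[of _ n] scalar_prod_smult_distrib[of _ n])
  moreover have "0 \<le> z \<bullet> (M *\<^sub>v z)" if "z \<in> carrier_vec n" for z
    using psd that M unfolding psd_def M_def[symmetric] by simp
  ultimately have "M *\<^sub>v x = 0\<^sub>v n"
    using psd_quadratic_form_eq_0_imp_kernel[OF M \<open>M\<^sup>T = M\<close> _ x] by blast
  hence "A *\<^sub>v x - c \<cdot>\<^sub>v x = 0\<^sub>v n" unfolding Mx .
  thus ?thesis by (rule minus_vec_eq_0_imp_eq[rotated 2]) (use A x in simp_all)
qed

lemma lambda_max_eqI:
  fixes A :: "real mat"
  assumes A: "A \<in> carrier_mat n n" and sym: "A\<^sup>T = A" and nsd: "nsd (A - l \<cdot>\<^sub>m 1\<^sub>m n)"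
    and x: "x \<in> carrier_vec n" "x \<noteq> 0\<^sub>v n" and eq: "x \<bullet> (A *\<^sub>v x) = l * (x \<bullet> x)"
  shows "lambda_max A = l"
proof -
  obtain Q d where QAd: "eigendecomposition n A Q d" using symmetric_mat_eigendecomposition[OF A sym] by blast
  have "0 < n" using x by (cases n) auto
  have "sorted_eigs A ! (n - 1) = l"
    by (rule eigendecomposition.sorted_eigs_last_eq[OF QAd \<open>0 < n\<close> _ x eq])
      (use nsd in \<open>simp add: nsd_shift_iff[OF A]\<close>)
  thus ?thesis unfolding lambda_max_def using A by simp
qed

lemma span_ones_and_centered_eigenvector:
  fixes A :: "real mat" and n :: nat
  defines "ones \<equiv> vec n (\<lambda>_. 1)"
  assumes A: "A \<in> carrier_mat n n"
    and shift: "\<And>y a. y \<in> carrier_vec n \<Longrightarrow> (y + a \<cdot>\<^sub>v ones) \<bullet> (A *\<^sub>v (y + a \<cdot>\<^sub>v ones)) = y \<bullet> (A *\<^sub>v y)"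
    and l: "0 \<le> l"
    and x: "x \<in> carrier_vec n" "x \<noteq> 0\<^sub>v n" "(\<Sum>k<n. x$k) = 0" and eq: "x \<bullet> (A *\<^sub>v x) = l * (x \<bullet> x)"
  shows "\<And>\<alpha> \<beta>. \<alpha> \<cdot>\<^sub>v ones + \<beta> \<cdot>\<^sub>v x = 0\<^sub>v n \<Longrightarrow> \<alpha> = 0 \<and> \<beta> = 0"
    and "\<And>\<alpha> \<beta>. let y = \<alpha> \<cdot>\<^sub>v ones + \<beta> \<cdot>\<^sub>v x in y \<bullet> (A *\<^sub>v y) \<le> l * (y \<bullet> y)"
proof -
  have ones: "ones \<in> carrier_vec n" unfolding ones_def by simp
  have x1: "x \<bullet> ones = 0" and n: "ones \<bullet> ones = real n"
    using x(1,3) unfolding ones_def by (simp_all add: scalar_prod_def lessThan_atLeast0)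
  have norm: "(\<alpha> \<cdot>\<^sub>v ones + \<beta> \<cdot>\<^sub>v x) \<bullet> (\<alpha> \<cdot>\<^sub>v ones + \<beta> \<cdot>\<^sub>v x) = \<alpha>^2 * real n + \<beta>^2 * (x \<bullet> x)" for \<alpha> \<beta>
    using ones x(1) x1 n comm_scalar_prod[OF x(1) ones]
    by (simp add: scalar_prod_add_distrib[of _ n] add_scalar_prod_distrib[of _ n]
        scalar_prod_smult_distrib[of _ n] smult_scalar_prod_distrib[of _ n] power2_eq_square)
  show "\<alpha> = 0 \<and> \<beta> = 0" if "\<alpha> \<cdot>\<^sub>v ones + \<beta> \<cdot>\<^sub>v x = 0\<^sub>v n" for \<alpha> \<beta>
  proof -
    have "\<alpha>^2 * real n + \<beta>^2 * (x \<bullet> x) = 0" using norm[of \<alpha> \<beta>] unfolding that by simp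
    moreover have "0 < x \<bullet> x" "0 < n" using x scalar_prod_self_pos_iff[OF x(1)] by (auto intro: gr0I)
    ultimately show ?thesis by (simp add: add_nonneg_eq_0_iff)
  qed
  show "let y = \<alpha> \<cdot>\<^sub>v ones + \<beta> \<cdot>\<^sub>v x in y \<bullet> (A *\<^sub>v y) \<le> l * (y \<bullet> y)" for \<alpha> \<beta>
  proof -
    have "\<alpha> \<cdot>\<^sub>v ones + \<beta> \<cdot>\<^sub>v x = \<beta> \<cdot>\<^sub>v x + \<alpha> \<cdot>\<^sub>v ones" using ones x(1) by (simp add: comm_add_vec[of _ n])
    hence "(\<alpha> \<cdot>\<^sub>v ones + \<beta> \<cdot>\<^sub>v x) \<bullet> (A *\<^sub>v (\<alpha> \<cdot>\<^sub>v ones + \<beta> \<cdot>\<^sub>v x)) = (\<beta> \<cdot>\<^sub>v x) \<bullet> (A *\<^sub>v (\<beta> \<cdot>\<^sub>v x))"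
      using shift[of "\<beta> \<cdot>\<^sub>v x" \<alpha>] x(1) by simp
    also have "\<dots> = \<beta>^2 * (l * (x \<bullet> x))" by (simp add: quadratic_form_smult[OF A x(1)] eq)
    also have "\<dots> \<le> l * (\<alpha>^2 * real n + \<beta>^2 * (x \<bullet> x))" using l by (simp add: algebra_simps)
    finally show ?thesis unfolding norm Let_def .
  qed
qed

lemma lambda2_eqI:
  fixes A :: "real mat" and n :: nat
  defines "ones \<equiv> vec n (\<lambda>_. 1)"
  assumes A: "A \<in> carrier_mat n n" and sym: "A\<^sup>T = A"
    and shift: "\<And>y a. y \<in> carrier_vec n \<Longrightarrow> (y + a \<cdot>\<^sub>v ones) \<bullet> (A *\<^sub>v (y + a \<cdot>\<^sub>v ones)) = y \<bullet> (A *\<^sub>v y)"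
    and psd: "psd (A + m \<cdot>\<^sub>m ones_mat n - l \<cdot>\<^sub>m 1\<^sub>m n)" and l: "0 \<le> l"
    and x: "x \<in> carrier_vec n" "x \<noteq> 0\<^sub>v n" "(\<Sum>k<n. x$k) = 0" and eq: "x \<bullet> (A *\<^sub>v x) = l * (x \<bullet> x)"
  shows "lambda2 A = l"
proof -
  have ones: "ones \<in> carrier_vec n" unfolding ones_def by simp
  obtain Q d where "eigendecomposition n A Q d" using symmetric_mat_eigendecomposition[OF A sym] by blast
  hence "sorted_eigs A ! 1 = l"
  proof (rule eigendecomposition.sorted_eigs_second_eq[OF _ ones _ ones x(1)])
    show "l * (y \<bullet> y) \<le> y \<bullet> (A *\<^sub>v y)" if "y \<in> carrier_vec n" "y \<bullet> ones = 0" for y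
    proof -
      have "l * (y \<bullet> y) \<le> y \<bullet> (A *\<^sub>v y) + m * (\<Sum>k<n. y$k)^2"
        using psd that(1) unfolding psd_shift_iff[OF A] by blast
      moreover have "(\<Sum>k<n. y$k) = y \<bullet> ones"
        using that(1) unfolding ones_def by (simp add: scalar_prod_def lessThan_atLeast0)
      ultimately show ?thesis using that(2) by simp
    qed
  qed (use span_ones_and_centered_eigenvector[OF A shift[unfolded ones_def] l x eq] in
      \<open>simp_all add: ones_def\<close>)
  thus ?thesis unfolding lambda2_def .
qed

section \<open>The Laplacian of the multiplex\<close>

lemma Lij_entry:
  assumes "k < n" "l < n"
  shows "Lij n i j $$ (k,l) = ((if k = i then 1 else 0) - (if k = j then 1 else 0)) *
                              ((if l = i then 1 else 0) - (if l = j then 1 else 0))"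
  using assms unfolding Lij_def Let_def by (auto simp: unit_vec_def)

lemma quadratic_form_Lij:
  fixes x :: "real vec"
  assumes i: "i < n" and j: "j < n"
  shows "(\<Sum>k<n. \<Sum>l<n. x$k * Lij n i j $$ (k,l) * x$l) = (x$i - x$j)^2"
proof -
  define a where "a = (\<lambda>k::nat. ((if k = i then 1 else 0) - (if k = j then 1 else 0)) :: real)"
  have "(\<Sum>k<n. x$k * a k) = (\<Sum>k<n. if k = i then x$k else 0) - (\<Sum>k<n. if k = j then x$k else 0)"
    unfolding a_def sum_subtractf[symmetric] by (intro sum.cong) auto
  hence a: "(\<Sum>k<n. x$k * a k) = x$i - x$j" using i j by simp
  have "(\<Sum>k<n. \<Sum>l<n. x$k * Lij n i j $$ (k,l) * x$l) = (\<Sum>k<n. x$k * a k) * (\<Sum>l<n. x$l * a l)"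
    unfolding sum_product by (intro sum.cong refl) (simp add: Lij_entry a_def)
  thus ?thesis unfolding a by (simp add: power2_eq_square)
qed

lemma Lw_carrier[simp]: "Lw N E w \<in> carrier_mat (2*N) (2*N)"
  unfolding Lw_def by simp

lemma Lw_entry:
  assumes "k < 2*N" "l < 2*N"
  shows "Lw N E w $$ (k,l) = (\<Sum>i<N. w i * Lij (2*N) i (N+i) $$ (k,l)) + (\<Sum>(i,j)\<in>E. Lij (2*N) i j $$ (k,l))"
  using assms unfolding Lw_def L0_def by simp

lemma Lw_symmetric: "(Lw N E w)\<^sup>T = Lw N E w"
proof (rule eq_matI)
  fix k l assume "k < dim_row (Lw N E w)" "l < dim_col (Lw N E w)"
  hence kl: "k < 2*N" "l < 2*N" using Lw_carrier[of N E w] by auto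
  hence "(Lw N E w)\<^sup>T $$ (k, l) = Lw N E w $$ (l, k)" by (simp add: Lw_def)
  thus "(Lw N E w)\<^sup>T $$ (k, l) = Lw N E w $$ (k, l)"
    using kl by (simp add: Lw_entry Lij_entry case_prod_beta mult.commute)
qed (simp_all add: Lw_def)

lemma sum_sum_mult_sum_swap:
  fixes x y :: "nat \<Rightarrow> real"
  shows "(\<Sum>k\<in>A. \<Sum>l\<in>B. x k * (\<Sum>p\<in>P. F p k l) * y l) = (\<Sum>p\<in>P. \<Sum>k\<in>A. \<Sum>l\<in>B. x k * F p k l * y l)"
proof -
  have "(\<Sum>k\<in>A. \<Sum>l\<in>B. x k * (\<Sum>p\<in>P. F p k l) * y l) = (\<Sum>k\<in>A. \<Sum>l\<in>B. \<Sum>p\<in>P. x k * F p k l * y l)"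
    by (simp add: sum_distrib_left sum_distrib_right)
  also have "\<dots> = (\<Sum>k\<in>A. \<Sum>p\<in>P. \<Sum>l\<in>B. x k * F p k l * y l)"
    by (intro sum.cong refl) (rule sum.swap)
  also have "\<dots> = (\<Sum>p\<in>P. \<Sum>k\<in>A. \<Sum>l\<in>B. x k * F p k l * y l)" by (rule sum.swap)
  finally show ?thesis .
qed

lemma quadratic_form_Lw:
  fixes x :: "real vec"
  assumes E: "E \<subseteq> {(i,j). i < 2*N \<and> j < 2*N}" and x: "x \<in> carrier_vec (2*N)"
  shows "x \<bullet> (Lw N E w *\<^sub>v x) = (\<Sum>i<N. w i * (x$i - x$(N+i))^2) + (\<Sum>(i,j)\<in>E. (x$i - x$j)^2)"
proof -
  let ?n = "2*N"
  have "x \<bullet> (Lw N E w *\<^sub>v x)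
      = (\<Sum>k<?n. \<Sum>l<?n. x$k * (\<Sum>i<N. w i * Lij ?n i (N+i) $$ (k,l)) * x$l)
      + (\<Sum>k<?n. \<Sum>l<?n. x$k * (\<Sum>p\<in>E. Lij ?n (fst p) (snd p) $$ (k,l)) * x$l)"
    unfolding quadratic_form_sum[OF Lw_carrier x]
    by (simp add: Lw_entry distrib_left distrib_right sum.distrib case_prod_beta)
  also have "\<dots> = (\<Sum>i<N. w i * (\<Sum>k<?n. \<Sum>l<?n. x$k * Lij ?n i (N+i) $$ (k,l) * x$l))
      + (\<Sum>p\<in>E. \<Sum>k<?n. \<Sum>l<?n. x$k * Lij ?n (fst p) (snd p) $$ (k,l) * x$l)"
    unfolding sum_sum_mult_sum_swap by (simp add: sum_distrib_left algebra_simps)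
  also have "\<dots> = (\<Sum>i<N. w i * (x$i - x$(N+i))^2) + (\<Sum>(i,j)\<in>E. (x$i - x$j)^2)"
    using E by (intro arg_cong2[where f = "(+)"] sum.cong refl)
      (auto simp: quadratic_form_Lij case_prod_beta)
  finally show ?thesis .
qed

lemma quadratic_form_Lw_shift:
  fixes y :: "real vec"
  assumes E: "E \<subseteq> {(i,j). i < 2*N \<and> j < 2*N}" and y: "y \<in> carrier_vec (2*N)"
  shows "(y + a \<cdot>\<^sub>v vec (2*N) (\<lambda>_. 1)) \<bullet> (Lw N E w *\<^sub>v (y + a \<cdot>\<^sub>v vec (2*N) (\<lambda>_. 1)))
       = y \<bullet> (Lw N E w *\<^sub>v y)"
  unfolding quadratic_form_Lw[OF E y] using E y
  by (subst quadratic_form_Lw[OF E]) (auto intro!: arg_cong2[where f = "(+)"] sum.cong)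

lemma quadratic_form_Lw_nonneg:
  assumes "E \<subseteq> {(i,j). i < 2*N \<and> j < 2*N}" and "x \<in> carrier_vec (2*N)" and "\<forall>i<N. 0 \<le> w i"
  shows "0 \<le> x \<bullet> (Lw N E w *\<^sub>v x)"
  unfolding quadratic_form_Lw[OF assms(1,2)] using assms(3) by (intro add_nonneg_nonneg sum_nonneg) auto

section \<open>A finite minimax theorem\<close>

text \<open>Hahn--Banach for sublinear functionals on finitely supported sequences, extending one
  coordinate at a time.\<close>

lemma sublinear_extension_value:
  fixes p L :: "(nat \<Rightarrow> real) \<Rightarrow> real" and k :: nat
  defines "W \<equiv> {w. \<forall>i\<ge>k. w i = 0}" and "e \<equiv> \<lambda>i. if i = k then 1 else 0"
  assumes sub: "\<And>x y. p (\<lambda>i. x i + y i) \<le> p x + p y"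
    and add: "\<And>x y. L (\<lambda>i. x i + y i) = L x + L y"
    and dom: "\<And>w. w \<in> W \<Longrightarrow> L w \<le> p w"
  shows "\<exists>g. \<forall>w\<in>W. L w - p (\<lambda>i. w i - e i) \<le> g \<and> g \<le> p (\<lambda>i. w i + e i) - L w"
proof -
  define S where "S = (\<lambda>w. L w - p (\<lambda>i. w i - e i)) ` W"
  define T where "T = (\<lambda>w. p (\<lambda>i. w i + e i) - L w) ` W"
  have ST: "s \<le> t" if sS: "s \<in> S" and tT: "t \<in> T" for s t
  proof -
    obtain w where w: "w \<in> W" and s: "s = L w - p (\<lambda>i. w i - e i)"
      using sS unfolding S_def by blast
    obtain w' where w': "w' \<in> W" and t: "t = p (\<lambda>i. w' i + e i) - L w'"
      using tT unfolding T_def by blast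
    have "L w + L w' = L (\<lambda>i. (w i - e i) + (w' i + e i))" using add[of w w'] by simp
    also have "\<dots> \<le> p (\<lambda>i. (w i - e i) + (w' i + e i))"
      using dom[of "\<lambda>i. w i + w' i"] w w' unfolding W_def by simp
    also have "\<dots> \<le> p (\<lambda>i. w i - e i) + p (\<lambda>i. w' i + e i)" by (rule sub)
    finally show ?thesis unfolding s t by simp
  qed
  have "(\<lambda>_. 0) \<in> W" unfolding W_def by simp
  hence ne: "S \<noteq> {}" "T \<noteq> {}" unfolding S_def T_def by auto
  have "bdd_above S" using ST ne(2) unfolding bdd_above_def by blast
  hence "s \<le> Sup S" if "s \<in> S" for s using that by (rule cSup_upper[rotated])
  moreover have "Sup S \<le> t" if "t \<in> T" for t using ST that ne(1) by (intro cSup_least) auto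
  ultimately show ?thesis unfolding S_def T_def by blast
qed

lemma sublinear_extension_step:
  fixes p L :: "(nat \<Rightarrow> real) \<Rightarrow> real" and k :: nat
  defines "W \<equiv> {w. \<forall>i\<ge>k. w i = 0}" and "e \<equiv> \<lambda>i. if i = k then 1 else 0"
  assumes sub: "\<And>x y. p (\<lambda>i. x i + y i) \<le> p x + p y"
    and hom: "\<And>s x. 0 < s \<Longrightarrow> p (\<lambda>i. s * x i) = s * p x"
    and lin: "\<And>x y. L (\<lambda>i. x i + y i) = L x + L y" "\<And>s x. L (\<lambda>i. s * x i) = s * L x"
    and dom: "\<And>w. w \<in> W \<Longrightarrow> L w \<le> p w"
  shows "\<exists>g. \<forall>w\<in>W. \<forall>s. L w + s * g \<le> p (\<lambda>i. w i + s * e i)"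
proof -
  obtain g where g: "\<And>w. w \<in> W \<Longrightarrow> L w - p (\<lambda>i. w i - e i) \<le> g \<and> g \<le> p (\<lambda>i. w i + e i) - L w"
    using sublinear_extension_value[of p L k, OF sub lin(1)] dom unfolding W_def e_def by blast
  have "L w + s * g \<le> p (\<lambda>i. w i + s * e i)" if w: "w \<in> W" for w s
  proof (cases s "0::real" rule: linorder_cases)
    case less
    define w' where "w' = (\<lambda>i. w i / (- s))"
    have "w' \<in> W" using w unfolding W_def w'_def by simp
    hence le: "L w' - p (\<lambda>i. w' i - e i) \<le> g" using g by blast
    have "(- s) * L w' - (- s) * p (\<lambda>i. w' i - e i) \<le> (- s) * g"
      using mult_left_mono[OF le, of "- s"] less by (simp add: right_diff_distrib)
    moreover have "(- s) * p (\<lambda>i. w' i - e i) = p (\<lambda>i. w i + s * e i)"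
      using hom[of "- s" "\<lambda>i. w' i - e i"] less by (simp add: w'_def algebra_simps)
    moreover have "(- s) * L w' = L w" using lin(2)[of "- s" w'] less by (simp add: w'_def)
    ultimately show ?thesis by (simp add: algebra_simps)
  next
    case equal
    thus ?thesis using dom[OF w] by simp
  next
    case greater
    define w' where "w' = (\<lambda>i. w i / s)"
    have "w' \<in> W" using w unfolding W_def w'_def by simp
    hence le: "g \<le> p (\<lambda>i. w' i + e i) - L w'" using g by blast
    have "s * g \<le> s * p (\<lambda>i. w' i + e i) - s * L w'"
      using mult_left_mono[OF le, of s] greater by (simp add: right_diff_distrib)
    moreover have "s * p (\<lambda>i. w' i + e i) = p (\<lambda>i. w i + s * e i)"
      using hom[of s "\<lambda>i. w' i + e i"] greater by (simp add: w'_def algebra_simps)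
    moreover have "s * L w' = L w" using lin(2)[of s w'] greater by (simp add: w'_def)
    ultimately show ?thesis by (simp add: algebra_simps)
  qed
  thus ?thesis by blast
qed

lemma sublinear_dominated_linear_exists:
  fixes p :: "(nat \<Rightarrow> real) \<Rightarrow> real"
  assumes sub: "\<And>x y. p (\<lambda>i. x i + y i) \<le> p x + p y"
    and hom: "\<And>s x. 0 < s \<Longrightarrow> p (\<lambda>i. s * x i) = s * p x"
    and p0: "0 \<le> p (\<lambda>_. 0)"
  shows "\<exists>l. \<forall>x. (\<forall>i\<ge>k. x i = 0) \<longrightarrow> (\<Sum>i<k. l i * x i) \<le> p x"
proof (induction k)
  case 0
  show ?case
  proof (intro exI allI impI)
    fix x :: "nat \<Rightarrow> real" assume "\<forall>i\<ge>0. x i = 0"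
    hence "x = (\<lambda>_. 0)" by auto
    thus "(\<Sum>i<0. l i * x i) \<le> p x" for l using p0 by simp
  qed
next
  case (Suc k)
  then obtain l where l: "\<And>x. \<forall>i\<ge>k. x i = 0 \<Longrightarrow> (\<Sum>i<k. l i * x i) \<le> p x" by blast
  have "\<exists>g. \<forall>w\<in>{w. \<forall>i\<ge>k. w i = 0}. \<forall>s.
      (\<Sum>i<k. l i * w i) + s * g \<le> p (\<lambda>i. w i + s * (if i = k then 1 else 0))"
  proof (rule sublinear_extension_step[OF sub hom])
    show "(\<Sum>i<k. l i * (x i + y i)) = (\<Sum>i<k. l i * x i) + (\<Sum>i<k. l i * y i)" for x y
      by (simp add: distrib_left sum.distrib)
    show "(\<Sum>i<k. l i * (s * x i)) = s * (\<Sum>i<k. l i * x i)" for s x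
      by (simp add: sum_distrib_left algebra_simps)
  qed (use l in auto)
  then obtain g where g: "\<And>w s. \<forall>i\<ge>k. w i = 0 \<Longrightarrow>
      (\<Sum>i<k. l i * w i) + s * g \<le> p (\<lambda>i. w i + s * (if i = k then 1 else 0))" by blast
  have "(\<Sum>i<Suc k. (l(k := g)) i * x i) \<le> p x" if x: "\<forall>i\<ge>Suc k. x i = 0" for x
  proof -
    have "(\<Sum>i<Suc k. (l(k := g)) i * x i) = (\<Sum>i<k. l i * (x(k := 0)) i) + x k * g"
      by (simp add: mult.commute)
    also have "\<dots> \<le> p (\<lambda>i. (x(k := 0)) i + x k * (if i = k then 1 else 0))"
      using g[of "x(k := 0)" "x k"] x by simp
    also have "(\<lambda>i. (x(k := 0)) i + x k * (if i = k then 1 else 0)) = x" by auto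
    finally show ?thesis .
  qed
  thus ?case by blast
qed

definition max_coord :: "nat \<Rightarrow> (nat \<Rightarrow> real) \<Rightarrow> real" where
  "max_coord N x = Max (x ` {..<N})"

lemma max_coord_ge: "j < N \<Longrightarrow> x j \<le> max_coord N x"
  unfolding max_coord_def by (rule Max_ge) auto

lemma max_coord_attained:
  assumes "0 < N"
  shows "\<exists>j<N. max_coord N x = x j"
proof -
  have "max_coord N x \<in> x ` {..<N}" unfolding max_coord_def using assms by (intro Max_in) auto
  thus ?thesis by auto
qed

lemma max_coord_le: "0 < N \<Longrightarrow> (\<And>j. j < N \<Longrightarrow> x j \<le> c) \<Longrightarrow> max_coord N x \<le> c"
  using max_coord_attained by metis

lemma max_coord_mono: "0 < N \<Longrightarrow> (\<And>j. j < N \<Longrightarrow> x j \<le> y j) \<Longrightarrow> max_coord N x \<le> max_coord N y"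
  by (rule max_coord_le) (auto intro: order_trans[OF _ max_coord_ge])

lemma max_coord_add_le: "0 < N \<Longrightarrow> max_coord N (\<lambda>i. x i + y i) \<le> max_coord N x + max_coord N y"
  by (rule max_coord_le) (auto intro: add_mono max_coord_ge)

lemma max_coord_scale:
  assumes N: "0 < N" and s: "0 < s"
  shows "max_coord N (\<lambda>i. s * x i) = s * max_coord N x"
proof (rule antisym)
  show "max_coord N (\<lambda>i. s * x i) \<le> s * max_coord N x"
    using N s by (intro max_coord_le) (auto intro: max_coord_ge)
  obtain j where "j < N" "max_coord N x = x j" using max_coord_attained[OF N] by blast
  thus "s * max_coord N x \<le> max_coord N (\<lambda>i. s * x i)" using max_coord_ge[of j N "\<lambda>i. s * x i"] by simp
qed

text \<open>The mixed strategy is a linear form dominated by the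
  sublinear gauge below, obtained from Hahn--Banach.\<close>

locale convexlike_game =
  fixes N :: nat and K :: "'k set" and G :: "'k \<Rightarrow> nat \<Rightarrow> real" and a :: real
  assumes N: "0 < N" and K: "K \<noteq> {}"
    and mix: "\<And>k1 k2 t. k1 \<in> K \<Longrightarrow> k2 \<in> K \<Longrightarrow> 0 \<le> t \<Longrightarrow> t \<le> 1 \<Longrightarrow>
        \<exists>k\<in>K. \<forall>i<N. t * G k1 i + (1 - t) * G k2 i \<le> G k i"
    and bound: "\<And>k. k \<in> K \<Longrightarrow> \<exists>i<N. G k i \<le> a"
begin

definition gauge :: "(nat \<Rightarrow> real) \<Rightarrow> real" where
  "gauge x = Inf {max_coord N (\<lambda>i. x i - t * G k i) + t * a | t k. 0 \<le> t \<and> k \<in> K}"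

lemma gauge_candidate_lower_bound:
  assumes "0 \<le> t" "k \<in> K"
  shows "- (\<Sum>i<N. \<bar>x i\<bar>) \<le> max_coord N (\<lambda>i. x i - t * G k i) + t * a"
proof -
  obtain j where j: "j < N" "G k j \<le> a" using bound[OF assms(2)] by blast
  have "x j - t * G k j \<le> max_coord N (\<lambda>i. x i - t * G k i)"
    using max_coord_ge[OF j(1), of "\<lambda>i. x i - t * G k i"] by simp
  moreover have "t * G k j \<le> t * a" using assms(1) j(2) by (rule mult_left_mono[rotated])
  moreover have "\<bar>x j\<bar> \<le> (\<Sum>i<N. \<bar>x i\<bar>)" using j(1) by (intro member_le_sum) auto
  ultimately show ?thesis by linarith
qed

lemma gauge_le:
  assumes "0 \<le> t" "k \<in> K"
  shows "gauge x \<le> max_coord N (\<lambda>i. x i - t * G k i) + t * a"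
  unfolding gauge_def using assms gauge_candidate_lower_bound
  by (intro cInf_lower) (auto simp: bdd_below_def)

lemma gauge_greatest:
  assumes "\<And>t k. 0 \<le> t \<Longrightarrow> k \<in> K \<Longrightarrow> c \<le> max_coord N (\<lambda>i. x i - t * G k i) + t * a"
  shows "c \<le> gauge x"
proof -
  obtain k0 where "k0 \<in> K" using K by blast
  hence "max_coord N (\<lambda>i. x i - 0 * G k0 i) + 0 * a \<in>
      {max_coord N (\<lambda>i. x i - t * G k i) + t * a | t k. 0 \<le> t \<and> k \<in> K}" by blast
  thus ?thesis unfolding gauge_def using assms by (intro cInf_greatest) blast+
qed

lemma gauge_le_max_coord: "gauge x \<le> max_coord N x"
  using gauge_le[of 0] K by auto

lemma gauge_zero_nonneg: "0 \<le> gauge (\<lambda>_. 0)"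
  using gauge_candidate_lower_bound[where x = "\<lambda>_. 0"] by (intro gauge_greatest) simp

lemma gauge_add_le:
  assumes 1: "0 \<le> t1" "k1 \<in> K" and 2: "0 \<le> t2" "k2 \<in> K"
  shows "gauge (\<lambda>i. x i + y i)
    \<le> (max_coord N (\<lambda>i. x i - t1 * G k1 i) + t1 * a) + (max_coord N (\<lambda>i. y i - t2 * G k2 i) + t2 * a)"
proof (cases "t1 + t2 = 0")
  case True
  hence "t1 = 0" "t2 = 0" using 1 2 by auto
  thus ?thesis using gauge_le[of 0 k1 "\<lambda>i. x i + y i"] max_coord_add_le[OF N, of x y] 1 by simp
next
  case False
  define T where "T = t1 + t2"
  have T: "0 < T" using False 1 2 unfolding T_def by simp
  obtain k where k: "k \<in> K" "\<forall>i<N. t1 / T * G k1 i + (1 - t1 / T) * G k2 i \<le> G k i"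
    using mix[OF 1(2) 2(2), of "t1 / T"] 1 2 T unfolding T_def by auto
  have "gauge (\<lambda>i. x i + y i) \<le> max_coord N (\<lambda>i. x i + y i - T * G k i) + T * a"
    using gauge_le[OF _ k(1)] T by simp
  also have "max_coord N (\<lambda>i. x i + y i - T * G k i)
      \<le> max_coord N (\<lambda>i. (x i - t1 * G k1 i) + (y i - t2 * G k2 i))"
  proof (rule max_coord_mono[OF N])
    fix j assume "j < N"
    hence "T * (t1 / T * G k1 j + (1 - t1 / T) * G k2 j) \<le> T * G k j"
      using k(2) T by (intro mult_left_mono) auto
    moreover have "T * (t1 / T * G k1 j + (1 - t1 / T) * G k2 j)
        = (T * (t1 / T)) * G k1 j + (T * (1 - t1 / T)) * G k2 j"
      by (simp only: distrib_left mult.assoc)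
    moreover have "T * (t1 / T) = t1" "T * (1 - t1 / T) = t2"
      using T unfolding T_def by (simp_all add: right_diff_distrib)
    ultimately show "x j + y j - T * G k j \<le> (x j - t1 * G k1 j) + (y j - t2 * G k2 j)" by simp
  qed
  also have "\<dots> \<le> max_coord N (\<lambda>i. x i - t1 * G k1 i) + max_coord N (\<lambda>i. y i - t2 * G k2 i)"
    by (rule max_coord_add_le[OF N])
  finally show ?thesis unfolding T_def by (simp add: algebra_simps)
qed

lemma gauge_subadditive: "gauge (\<lambda>i. x i + y i) \<le> gauge x + gauge y"
proof -
  have "gauge (\<lambda>i. x i + y i) - (max_coord N (\<lambda>i. y i - t2 * G k2 i) + t2 * a) \<le> gauge x"
    if t2: "0 \<le> t2" and k2: "k2 \<in> K" for t2 k2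
  proof (rule gauge_greatest)
    fix t :: real and k assume "0 \<le> t" "k \<in> K"
    from gauge_add_le[OF this t2 k2, where x = x and y = y]
    show "gauge (\<lambda>i. x i + y i) - (max_coord N (\<lambda>i. y i - t2 * G k2 i) + t2 * a)
        \<le> max_coord N (\<lambda>i. x i - t * G k i) + t * a" by simp
  qed
  hence "gauge (\<lambda>i. x i + y i) - gauge x \<le> max_coord N (\<lambda>i. y i - t * G k i) + t * a"
    if "0 \<le> t" "k \<in> K" for t k
    using that by fastforce
  hence "gauge (\<lambda>i. x i + y i) - gauge x \<le> gauge y" by (rule gauge_greatest)
  thus ?thesis by simp
qed

lemma gauge_pos_homogeneous:
  assumes s: "0 < s"
  shows "gauge (\<lambda>i. s * x i) = s * gauge x"
proof (rule antisym)
  have "gauge (\<lambda>i. s * x i) / s \<le> max_coord N (\<lambda>i. x i - t * G k i) + t * a"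
    if "0 \<le> t" "k \<in> K" for t k
  proof -
    have "gauge (\<lambda>i. s * x i) \<le> max_coord N (\<lambda>i. s * x i - (s * t) * G k i) + (s * t) * a"
      using gauge_le[of "s * t" k] that s by simp
    also have "max_coord N (\<lambda>i. s * x i - (s * t) * G k i) = s * max_coord N (\<lambda>i. x i - t * G k i)"
      using max_coord_scale[OF N s, of "\<lambda>i. x i - t * G k i"] by (simp add: algebra_simps)
    finally show ?thesis using s by (simp add: field_simps)
  qed
  hence "gauge (\<lambda>i. s * x i) / s \<le> gauge x" by (rule gauge_greatest)
  thus "gauge (\<lambda>i. s * x i) \<le> s * gauge x" using s by (simp add: field_simps)
  have "s * gauge x \<le> max_coord N (\<lambda>i. s * x i - t * G k i) + t * a"
    if "0 \<le> t" "k \<in> K" for t k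
  proof -
    have "s * gauge x \<le> s * (max_coord N (\<lambda>i. x i - (t / s) * G k i) + (t / s) * a)"
      using gauge_le[of "t / s" k x] that s by (intro mult_left_mono) auto
    also have "\<dots> = max_coord N (\<lambda>i. s * x i - t * G k i) + t * a"
      using max_coord_scale[OF N s, of "\<lambda>i. x i - (t / s) * G k i"] s by (simp add: algebra_simps)
    finally show ?thesis .
  qed
  thus "s * gauge x \<le> gauge (\<lambda>i. s * x i)" by (rule gauge_greatest)
qed

theorem mixed_strategy_exists:
  "\<exists>l. (\<forall>i<N. 0 \<le> l i) \<and> (\<Sum>i<N. l i) = 1 \<and> (\<forall>k\<in>K. (\<Sum>i<N. l i * G k i) \<le> a)"
proof -
  obtain l where l: "\<And>x. \<forall>i\<ge>N. x i = 0 \<Longrightarrow> (\<Sum>i<N. l i * x i) \<le> gauge x"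
    using sublinear_dominated_linear_exists[of gauge N, OF gauge_subadditive gauge_pos_homogeneous
        gauge_zero_nonneg] by blast
  have dom: "(\<Sum>i<N. l i * x i) \<le> max_coord N x" if "\<forall>i\<ge>N. x i = 0" for x
    using l[OF that] gauge_le_max_coord[of x] by linarith
  have "0 \<le> l j" if j: "j < N" for j
  proof -
    have "(\<Sum>i<N. l i * (if i = j then -1 else 0)) = - l j" using j by (simp add: if_distrib cong: if_cong)
    moreover have "max_coord N (\<lambda>i. if i = j then -1 else 0) \<le> 0" using N by (intro max_coord_le) auto
    ultimately show ?thesis using dom[of "\<lambda>i. if i = j then -1 else 0"] j by simp
  qed
  moreover have "(\<Sum>i<N. l i) = 1"
    using dom[of "\<lambda>i. if i < N then 1 else 0"] dom[of "\<lambda>i. if i < N then -1 else 0"]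
      max_coord_le[OF N, of "\<lambda>i. if i < N then 1 else 0" 1]
      max_coord_le[OF N, of "\<lambda>i. if i < N then -1 else 0" "-1"]
    by (simp add: sum_negf)
  moreover have "(\<Sum>i<N. l i * G k i) \<le> a" if k: "k \<in> K" for k
  proof -
    have "(\<Sum>i<N. l i * G k i) \<le> gauge (\<lambda>i. if i < N then G k i else 0)"
      using l[of "\<lambda>i. if i < N then G k i else 0"] by simp
    also have "\<dots> \<le> max_coord N (\<lambda>i. (if i < N then G k i else 0) - 1 * G k i) + 1 * a"
      by (rule gauge_le[OF _ k]) simp
    also have "max_coord N (\<lambda>i. (if i < N then G k i else 0) - 1 * G k i) \<le> 0"
      using N by (intro max_coord_le) auto
    finally show ?thesis by simp
  qed
  ultimately show ?thesis by blast
qed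

end

section \<open>The embedding problem and strong duality\<close>

definition emb_configs :: "nat \<Rightarrow> ((nat \<Rightarrow> real vec) \<times> (nat \<Rightarrow> real vec)) set" where
  "emb_configs N = {(u,v). (\<forall>i<2*N. u i \<in> carrier_vec (2*N) \<and> v i \<in> carrier_vec (2*N)) \<and>
     (\<Sum>i<2*N. sqn (u i)) = 1 \<and> (\<Sum>i<2*N. sqn (v i)) = 1 \<and> (\<forall>k<2*N. (\<Sum>i<2*N. u i $ k) = 0)}"

definition interlayer_gap :: "nat \<Rightarrow> (nat \<Rightarrow> real vec) \<Rightarrow> (nat \<Rightarrow> real vec) \<Rightarrow> nat \<Rightarrow> real" where
  "interlayer_gap N u v i = sqn (v i - v (N+i)) - sqn (u i - u (N+i))"

definition intralayer_gap :: "(nat \<times> nat) set \<Rightarrow> (nat \<Rightarrow> real vec) \<Rightarrow> (nat \<Rightarrow> real vec) \<Rightarrow> real" where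
  "intralayer_gap E u v = (\<Sum>(i,j)\<in>E. sqn (v i - v j)) - (\<Sum>(i,j)\<in>E. sqn (u i - u j))"

lemma emb_feasible_iff:
  "emb_feasible N xi u v \<longleftrightarrow> (u,v) \<in> emb_configs N \<and> (\<forall>i<N. xi \<le> interlayer_gap N u v i)"
  unfolding emb_feasible_def emb_configs_def interlayer_gap_def E3_def by auto

lemma emb_obj_eq: "emb_obj N E c xi u v = c * xi + intralayer_gap E u v"
  unfolding emb_obj_def intralayer_gap_def by simp

lemma sqn_diff:
  "a \<in> carrier_vec n \<Longrightarrow> b \<in> carrier_vec n \<Longrightarrow> sqn (a - b) = a \<bullet> a + b \<bullet> b - 2 * (a \<bullet> b)"
  unfolding sqn_def
  by (simp add: minus_scalar_prod_distrib[of _ n] scalar_prod_minus_distrib[of _ n] comm_scalar_prod[of b n a])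

lemma gram_quadratic_form:
  fixes u :: "nat \<Rightarrow> real vec"
  assumes u: "\<And>i. i < n \<Longrightarrow> u i \<in> carrier_vec m"
  shows "(\<Sum>i<n. \<Sum>j<n. z i * (u i \<bullet> u j) * z j) = (\<Sum>r<m. (\<Sum>i<n. z i * u i $ r)^2)"
proof -
  have "(\<Sum>i<n. \<Sum>j<n. z i * (u i \<bullet> u j) * z j) = (\<Sum>i<n. \<Sum>j<n. \<Sum>r<m. z i * u i $ r * (z j * u j $ r))"
  proof (intro sum.cong refl)
    fix i j assume "i \<in> {..<n}" "j \<in> {..<n}"
    hence "u i \<in> carrier_vec m" "u j \<in> carrier_vec m" using u by auto
    thus "z i * (u i \<bullet> u j) * z j = (\<Sum>r<m. z i * u i $ r * (z j * u j $ r))"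
      by (simp add: scalar_prod_def lessThan_atLeast0 sum_distrib_left sum_distrib_right algebra_simps)
  qed
  also have "\<dots> = (\<Sum>i<n. \<Sum>r<m. \<Sum>j<n. z i * u i $ r * (z j * u j $ r))"
    by (rule sum.cong[OF refl], rule sum.swap)
  also have "\<dots> = (\<Sum>r<m. \<Sum>i<n. \<Sum>j<n. z i * u i $ r * (z j * u j $ r))" by (rule sum.swap)
  also have "\<dots> = (\<Sum>r<m. (\<Sum>i<n. z i * u i $ r)^2)"
    by (simp add: power2_eq_square sum_product)
  finally show ?thesis .
qed

lemma centered_iff_gram_sum_eq_0:
  assumes "\<And>i. i < n \<Longrightarrow> u i \<in> carrier_vec n"
  shows "(\<forall>k<n. (\<Sum>i<n. u i $ k) = (0::real)) \<longleftrightarrow> (\<Sum>i<n. \<Sum>j<n. u i \<bullet> u j) = 0"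
proof -
  have "(\<Sum>i<n. \<Sum>j<n. u i \<bullet> u j) = (\<Sum>r<n. (\<Sum>i<n. 1 * u i $ r)^2)"
    using gram_quadratic_form[of n u n "\<lambda>_. 1"] assms by simp
  also have "\<dots> = 0 \<longleftrightarrow> (\<forall>r\<in>{..<n}. (\<Sum>i<n. 1 * u i $ r)^2 = 0)"
    by (rule sum_nonneg_eq_0_iff) auto
  finally show ?thesis by auto
qed

lemma gram_mix_exists:
  fixes u1 u2 :: "nat \<Rightarrow> real vec"
  assumes u1: "\<And>k. k < n \<Longrightarrow> u1 k \<in> carrier_vec n" and u2: "\<And>k. k < n \<Longrightarrow> u2 k \<in> carrier_vec n"
    and t: "0 \<le> t" "t \<le> 1"
  shows "\<exists>u. (\<forall>k<n. u k \<in> carrier_vec n) \<and>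
     (\<forall>i<n. \<forall>j<n. u i \<bullet> u j = t * (u1 i \<bullet> u1 j) + (1 - t) * (u2 i \<bullet> u2 j))"
proof -
  define X where "X = mat n n (\<lambda>(i,j). t * (u1 i \<bullet> u1 j) + (1 - t) * (u2 i \<bullet> u2 j))"
  have X: "X \<in> carrier_mat n n" unfolding X_def by simp
  have "X\<^sup>T = X" unfolding X_def using u1 u2 by (intro eq_matI) (auto simp: comm_scalar_prod[of _ n])
  moreover have "0 \<le> y \<bullet> (X *\<^sub>v y)" if y: "y \<in> carrier_vec n" for y
  proof -
    have "y \<bullet> (X *\<^sub>v y) = (\<Sum>i<n. \<Sum>j<n. t * (y$i * (u1 i \<bullet> u1 j) * y$j)
        + (1 - t) * (y$i * (u2 i \<bullet> u2 j) * y$j))"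
      unfolding quadratic_form_sum[OF X y] unfolding X_def by (intro sum.cong refl) (simp add: algebra_simps)
    also have "\<dots> = t * (\<Sum>i<n. \<Sum>j<n. y$i * (u1 i \<bullet> u1 j) * y$j)
        + (1 - t) * (\<Sum>i<n. \<Sum>j<n. y$i * (u2 i \<bullet> u2 j) * y$j)"
      by (simp add: sum_distrib_left sum.distrib)
    also have "\<dots> = t * (\<Sum>r<n. (\<Sum>i<n. y$i * u1 i $ r)^2) + (1 - t) * (\<Sum>r<n. (\<Sum>i<n. y$i * u2 i $ r)^2)"
      using gram_quadratic_form[of n u1 n "\<lambda>i. y$i"] gram_quadratic_form[of n u2 n "\<lambda>i. y$i"] u1 u2 by simp
    also have "\<dots> \<ge> 0" using t by (intro add_nonneg_nonneg mult_nonneg_nonneg sum_nonneg) auto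
    finally show ?thesis .
  qed
  ultimately obtain u where "\<forall>i<n. u i \<in> carrier_vec n" "\<forall>i<n. \<forall>j<n. u i \<bullet> u j = X $$ (i,j)"
    using psd_gram_factorization[OF X] by blast
  thus ?thesis unfolding X_def by auto
qed

lemma gram_mix_sqn_diff:
  assumes "u i \<in> carrier_vec n" "u j \<in> carrier_vec n" "u1 i \<in> carrier_vec n" "u1 j \<in> carrier_vec n"
    "u2 i \<in> carrier_vec n" "u2 j \<in> carrier_vec n"
    and "\<And>k l. k \<in> {i,j} \<Longrightarrow> l \<in> {i,j} \<Longrightarrow> u k \<bullet> u l = t * (u1 k \<bullet> u1 l) + (1 - t) * (u2 k \<bullet> u2 l)"
  shows "sqn (u i - u j) = t * sqn (u1 i - u1 j) + (1 - t) * sqn (u2 i - u2 j)"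
proof -
  have g: "u i \<bullet> u i = t * (u1 i \<bullet> u1 i) + (1 - t) * (u2 i \<bullet> u2 i)"
    "u j \<bullet> u j = t * (u1 j \<bullet> u1 j) + (1 - t) * (u2 j \<bullet> u2 j)"
    "u i \<bullet> u j = t * (u1 i \<bullet> u1 j) + (1 - t) * (u2 i \<bullet> u2 j)" using assms(7) by auto
  have s: "sqn (u i - u j) = u i \<bullet> u i + u j \<bullet> u j - 2 * (u i \<bullet> u j)"
    "sqn (u1 i - u1 j) = u1 i \<bullet> u1 i + u1 j \<bullet> u1 j - 2 * (u1 i \<bullet> u1 j)"
    "sqn (u2 i - u2 j) = u2 i \<bullet> u2 i + u2 j \<bullet> u2 j - 2 * (u2 i \<bullet> u2 j)"
    using assms(1-6) by (simp_all add: sqn_diff[of _ n])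
  show ?thesis unfolding s g by (simp add: algebra_simps)
qed

lemma edge_sum_sqn_mix:
  assumes E: "E \<subseteq> {(i,j). i < n \<and> j < n}"
    and mix: "\<And>i j. i < n \<Longrightarrow> j < n \<Longrightarrow> sqn (f i - f j) = t * sqn (f1 i - f1 j) + (1 - t) * sqn (f2 i - f2 j)"
  shows "(\<Sum>(i,j)\<in>E. sqn (f i - f j))
    = t * (\<Sum>(i,j)\<in>E. sqn (f1 i - f1 j)) + (1 - t) * (\<Sum>(i,j)\<in>E. sqn (f2 i - f2 j))"
proof -
  have "(\<Sum>(i,j)\<in>E. sqn (f i - f j)) = (\<Sum>(i,j)\<in>E. t * sqn (f1 i - f1 j) + (1 - t) * sqn (f2 i - f2 j))"
    using E mix by (intro sum.cong refl) auto
  thus ?thesis by (simp add: sum.distrib sum_distrib_left case_prod_beta)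
qed

lemma emb_configs_mix:
  assumes E: "E \<subseteq> {(i,j). i < 2*N \<and> j < 2*N}"
    and 1: "(u1,v1) \<in> emb_configs N" and 2: "(u2,v2) \<in> emb_configs N" and t: "0 \<le> t" "t \<le> 1"
  shows "\<exists>u v. (u,v) \<in> emb_configs N \<and>
     intralayer_gap E u v = t * intralayer_gap E u1 v1 + (1 - t) * intralayer_gap E u2 v2 \<and>
     (\<forall>i<N. interlayer_gap N u v i = t * interlayer_gap N u1 v1 i + (1 - t) * interlayer_gap N u2 v2 i)"
proof -
  let ?n = "2*N"
  note cfg = 1[unfolded emb_configs_def] 2[unfolded emb_configs_def]
  obtain u where u: "\<forall>k<?n. u k \<in> carrier_vec ?n"
    and gu: "\<forall>i<?n. \<forall>j<?n. u i \<bullet> u j = t * (u1 i \<bullet> u1 j) + (1 - t) * (u2 i \<bullet> u2 j)"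
    using gram_mix_exists[of ?n u1 u2 t] cfg t by auto
  obtain v where v: "\<forall>k<?n. v k \<in> carrier_vec ?n"
    and gv: "\<forall>i<?n. \<forall>j<?n. v i \<bullet> v j = t * (v1 i \<bullet> v1 j) + (1 - t) * (v2 i \<bullet> v2 j)"
    using gram_mix_exists[of ?n v1 v2 t] cfg t by auto
  have mu: "sqn (u i - u j) = t * sqn (u1 i - u1 j) + (1 - t) * sqn (u2 i - u2 j)"
    if "i < ?n" "j < ?n" for i j
    by (rule gram_mix_sqn_diff[of u i ?n]) (use that u gu cfg in auto)
  have mv: "sqn (v i - v j) = t * sqn (v1 i - v1 j) + (1 - t) * sqn (v2 i - v2 j)"
    if "i < ?n" "j < ?n" for i j
    by (rule gram_mix_sqn_diff[of v i ?n]) (use that v gv cfg in auto)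
  have norm: "(\<Sum>i<?n. sqn (u i)) = 1" "(\<Sum>i<?n. sqn (v i)) = 1"
    using gu gv cfg unfolding sqn_def by (simp_all add: sum.distrib sum_distrib_left[symmetric])
  have "(\<Sum>i<?n. \<Sum>j<?n. u i \<bullet> u j)
      = t * (\<Sum>i<?n. \<Sum>j<?n. u1 i \<bullet> u1 j) + (1 - t) * (\<Sum>i<?n. \<Sum>j<?n. u2 i \<bullet> u2 j)"
    using gu by (simp add: sum.distrib sum_distrib_left)
  hence "\<forall>k<?n. (\<Sum>i<?n. u i $ k) = 0"
    using centered_iff_gram_sum_eq_0[of ?n u] centered_iff_gram_sum_eq_0[of ?n u1]
      centered_iff_gram_sum_eq_0[of ?n u2] u cfg by auto
  hence K: "(u,v) \<in> emb_configs N" unfolding emb_configs_def using u v norm by auto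
  have "intralayer_gap E u v = t * intralayer_gap E u1 v1 + (1 - t) * intralayer_gap E u2 v2"
    using edge_sum_sqn_mix[OF E mu] edge_sum_sqn_mix[OF E mv]
    unfolding intralayer_gap_def by (simp add: algebra_simps)
  moreover have "\<forall>i<N. interlayer_gap N u v i = t * interlayer_gap N u1 v1 i + (1 - t) * interlayer_gap N u2 v2 i"
    unfolding interlayer_gap_def using mu mv by (auto simp: algebra_simps)
  ultimately show ?thesis using K by blast
qed

definition rank_one_config :: "nat \<Rightarrow> real vec \<Rightarrow> nat \<Rightarrow> real vec" where
  "rank_one_config n x k = x $ k \<cdot>\<^sub>v unit_vec n 0"

lemma rank_one_config_carrier: "rank_one_config n x k \<in> carrier_vec n"
  unfolding rank_one_config_def by simp

lemma sqn_rank_one_config_diff: "0 < n \<Longrightarrow> sqn (rank_one_config n x i - rank_one_config n x j) = (x$i - x$j)^2"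
  unfolding rank_one_config_def sqn_def
  by (simp add: minus_scalar_prod_distrib[of _ n] scalar_prod_minus_distrib[of _ n]
      scalar_prod_smult_distrib[of _ n] smult_scalar_prod_distrib[of _ n] power2_eq_square algebra_simps)

lemma sqn_rank_one_config: "0 < n \<Longrightarrow> sqn (rank_one_config n x k) = (x$k)^2"
  unfolding rank_one_config_def sqn_def
  by (simp add: scalar_prod_smult_distrib[of _ n] smult_scalar_prod_distrib[of _ n] power2_eq_square)

lemma rank_one_configs_in_emb_configs:
  assumes x: "x \<in> carrier_vec (2*N)" "x \<bullet> x = 1" "(\<Sum>k<2*N. x$k) = 0"
    and y: "y \<in> carrier_vec (2*N)" "y \<bullet> y = 1"
  shows "(rank_one_config (2*N) x, rank_one_config (2*N) y) \<in> emb_configs N"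
proof -
  have n: "0 < 2*N" using x(1,2) by (cases N) (auto simp: scalar_prod_def)
  have "(\<Sum>k<2*N. sqn (rank_one_config (2*N) z k)) = z \<bullet> z" if "z \<in> carrier_vec (2*N)" for z
    using that n by (simp add: sqn_rank_one_config scalar_prod_def lessThan_atLeast0 power2_eq_square)
  moreover have "(\<Sum>i<2*N. rank_one_config (2*N) x i $ k) = 0" if "k < 2*N" for k
    using that x(3) by (simp add: rank_one_config_def unit_vec_def sum_distrib_right[symmetric])
  ultimately show ?thesis unfolding emb_configs_def using x y by (simp add: rank_one_config_carrier)
qed

lemma rank_one_configs_payoff:
  assumes E: "E \<subseteq> {(i,j). i < 2*N \<and> j < 2*N}"
    and x: "x \<in> carrier_vec (2*N)" and y: "y \<in> carrier_vec (2*N)" and N: "0 < N"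
  defines "u \<equiv> rank_one_config (2*N) x" and "v \<equiv> rank_one_config (2*N) y"
  shows "intralayer_gap E u v + (\<Sum>i<N. w i * interlayer_gap N u v i)
    = y \<bullet> (Lw N E w *\<^sub>v y) - x \<bullet> (Lw N E w *\<^sub>v x)"
  unfolding quadratic_form_Lw[OF E x] quadratic_form_Lw[OF E y] intralayer_gap_def interlayer_gap_def
    u_def v_def using N
  by (simp add: sqn_rank_one_config_diff case_prod_beta right_diff_distrib sum_subtractf)

lemma nonneg_on_unit_sphere_imp_nonneg:
  fixes f :: "real vec \<Rightarrow> real"
  assumes hom: "\<And>a y. y \<in> carrier_vec n \<Longrightarrow> f (a \<cdot>\<^sub>v y) = a^2 * f y"
    and P: "\<And>a y. y \<in> carrier_vec n \<Longrightarrow> P y \<Longrightarrow> P (a \<cdot>\<^sub>v y)"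
    and unit: "\<And>y. y \<in> carrier_vec n \<Longrightarrow> P y \<Longrightarrow> y \<bullet> y = 1 \<Longrightarrow> 0 \<le> f y"
    and y: "y \<in> carrier_vec n" "P y"
  shows "0 \<le> f y"
proof (cases "y = 0\<^sub>v n")
  case True
  hence "0 \<cdot>\<^sub>v y = y" by (intro eq_vecI) auto
  thus ?thesis using hom[OF y(1), of 0] by simp
next
  case False
  hence pos: "0 < y \<bullet> y" using scalar_prod_self_pos_iff[OF y(1)] by simp
  define a where "a = 1 / sqrt (y \<bullet> y)"
  have "(a \<cdot>\<^sub>v y) \<bullet> (a \<cdot>\<^sub>v y) = a^2 * (y \<bullet> y)"
    using y by (simp add: scalar_prod_smult_distrib[of _ n] smult_scalar_prod_distrib[of _ n] power2_eq_square)
  also have "\<dots> = 1" unfolding a_def using pos by (simp add: power_divide)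
  finally have "0 \<le> a^2 * f y" using unit[of "a \<cdot>\<^sub>v y"] P y hom by simp
  moreover have "0 < a^2" unfolding a_def using pos by simp
  ultimately show ?thesis by (simp add: zero_le_mult_iff)
qed

text \<open>Any vector splits into a centred part and a multiple of \<open>ones\<close>; the penalty \<open>\<bar>l\<bar>\<close>
  on the latter absorbs its contribution to \<open>l * (z \<bullet> z)\<close>.\<close>

lemma psd_shift_of_centered_bound:
  fixes A :: "real mat" and n :: nat
  defines "ones \<equiv> vec n (\<lambda>_. 1)"
  assumes A: "A \<in> carrier_mat n n" and n: "0 < n"
    and shift: "\<And>y a. y \<in> carrier_vec n \<Longrightarrow> (y + a \<cdot>\<^sub>v ones) \<bullet> (A *\<^sub>v (y + a \<cdot>\<^sub>v ones)) = y \<bullet> (A *\<^sub>v y)"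
    and bound: "\<And>z. z \<in> carrier_vec n \<Longrightarrow> (\<Sum>k<n. z$k) = 0 \<Longrightarrow> l * (z \<bullet> z) \<le> z \<bullet> (A *\<^sub>v z)"
  shows "psd (A + \<bar>l\<bar> \<cdot>\<^sub>m ones_mat n - l \<cdot>\<^sub>m 1\<^sub>m n)"
  unfolding psd_shift_iff[OF A]
proof
  fix z :: "real vec" assume z: "z \<in> carrier_vec n"
  have ones: "ones \<in> carrier_vec n" unfolding ones_def by simp
  define \<alpha> where "\<alpha> = (\<Sum>k<n. z$k) / real n"
  define z' where "z' = z + (- \<alpha>) \<cdot>\<^sub>v ones"
  have z': "z' \<in> carrier_vec n" unfolding z'_def using z ones by simp
  have zz': "z = z' + \<alpha> \<cdot>\<^sub>v ones" unfolding z'_def using z ones by (intro eq_vecI) auto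
  have "(\<Sum>k<n. z'$k) = (\<Sum>k<n. z$k) - \<alpha> * real n"
    unfolding z'_def ones_def using z by (simp add: sum_subtractf)
  hence sz': "(\<Sum>k<n. z'$k) = 0" unfolding \<alpha>_def using n by simp
  hence "z' \<bullet> ones = 0" using z' unfolding ones_def by (simp add: scalar_prod_def lessThan_atLeast0)
  moreover have "ones \<bullet> ones = real n" unfolding ones_def by (simp add: scalar_prod_def)
  ultimately have norm: "z \<bullet> z = z' \<bullet> z' + \<alpha>^2 * real n"
    unfolding zz' using z' ones comm_scalar_prod[OF z' ones]
    by (simp add: scalar_prod_add_distrib[of _ n] add_scalar_prod_distrib[of _ n]
        scalar_prod_smult_distrib[of _ n] smult_scalar_prod_distrib[of _ n] power2_eq_square)
  have "(\<Sum>k<n. z$k)^2 = \<alpha>^2 * (real n)^2" unfolding \<alpha>_def using n by (simp add: power_divide)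
  moreover have "l * (\<alpha>^2 * real n) \<le> \<bar>l\<bar> * (\<alpha>^2 * (real n)^2)"
  proof -
    have "l * (\<alpha>^2 * real n) \<le> \<bar>l\<bar> * (\<alpha>^2 * real n)" by (intro mult_right_mono) auto
    also have "\<dots> \<le> \<bar>l\<bar> * (\<alpha>^2 * (real n)^2)"
      using n by (intro mult_left_mono) (auto simp: power2_eq_square)
    finally show ?thesis .
  qed
  ultimately show "l * (z \<bullet> z) \<le> z \<bullet> (A *\<^sub>v z) + \<bar>l\<bar> * (\<Sum>k<n. z$k)^2"
    using bound[OF z' sz'] shift[OF z', of \<alpha>] unfolding norm zz'[symmetric] by (simp add: distrib_left)
qed

lemma unit_centered_vec_exists:
  assumes "2 \<le> n"
  shows "\<exists>x \<in> carrier_vec n. x \<bullet> x = (1::real) \<and> (\<Sum>k<n. x$k) = 0"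
proof -
  define e :: "real vec" where "e = unit_vec n 0 - unit_vec n 1"
  have e: "e \<in> carrier_vec n" "e \<bullet> e = 2" "(\<Sum>k<n. e$k) = 0"
    unfolding e_def using assms
    by (simp_all add: minus_scalar_prod_distrib[of _ n] scalar_prod_minus_distrib[of _ n]
        scalar_prod_left_unit sum_subtractf)
  show ?thesis using e
    by (intro bexI[of _ "(1 / sqrt 2) \<cdot>\<^sub>v e"]) (simp_all add: scalar_prod_smult_distrib[of _ n]
        smult_scalar_prod_distrib[of _ n] sum_divide_distrib[symmetric])
qed

lemma rayleigh_gap_smult:
  fixes A :: "real mat"
  assumes "A \<in> carrier_mat n n" and "y \<in> carrier_vec n"
  shows "(a \<cdot>\<^sub>v y) \<bullet> (A *\<^sub>v (a \<cdot>\<^sub>v y)) - l * ((a \<cdot>\<^sub>v y) \<bullet> (a \<cdot>\<^sub>v y)) = a^2 * (y \<bullet> (A *\<^sub>v y) - l * (y \<bullet> y))"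
  using assms quadratic_form_smult[OF assms, of a]
  by (simp add: scalar_prod_smult_distrib[of _ n] smult_scalar_prod_distrib[of _ n] power2_eq_square algebra_simps)

lemma sw_feasible_of_rayleigh_gap:
  fixes w :: "nat \<Rightarrow> real"
  assumes E: "E \<subseteq> {(i,j). i < 2*N \<and> j < 2*N}" and N: "0 < N"
    and w: "\<forall>i<N. 0 \<le> w i" and sw: "(\<Sum>i<N. w i) = c"
    and gap: "\<And>x y. x \<in> carrier_vec (2*N) \<Longrightarrow> y \<in> carrier_vec (2*N) \<Longrightarrow> x \<bullet> x = 1 \<Longrightarrow> y \<bullet> y = 1 \<Longrightarrow>
        (\<Sum>k<2*N. x$k) = 0 \<Longrightarrow> y \<bullet> (Lw N E w *\<^sub>v y) - x \<bullet> (Lw N E w *\<^sub>v x) \<le> V"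
  shows "\<exists>lm l2 mu. sw_feasible N E c w lm l2 mu \<and> lm - l2 = V"
proof -
  let ?n = "2*N"
  define L where "L = Lw N E w"
  note gap = gap[folded L_def]
  have L: "L \<in> carrier_mat ?n ?n" unfolding L_def by simp
  have "2 \<le> ?n" using N by simp
  then obtain x0 :: "real vec" where x0: "x0 \<in> carrier_vec ?n" "x0 \<bullet> x0 = 1" "(\<Sum>k<?n. x0$k) = 0"
    using unit_centered_vec_exists by blast
  define S where "S = {y \<bullet> (L *\<^sub>v y) | y. y \<in> carrier_vec ?n \<and> y \<bullet> y = 1}"
  have "S \<noteq> {}" unfolding S_def using x0 by blast
  have "bdd_above S" unfolding S_def bdd_above_def using gap[OF x0(1) _ x0(2) _ x0(3)]
    by (intro exI[of _ "V + x0 \<bullet> (L *\<^sub>v x0)"]) force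
  define lm where "lm = Sup S"
  define l2 where "l2 = lm - V"
  have "0 \<le> lm * (y \<bullet> y) - y \<bullet> (L *\<^sub>v y)" if "y \<in> carrier_vec ?n" for y
  proof (rule nonneg_on_unit_sphere_imp_nonneg[where P = "\<lambda>_. True", OF _ _ _ that])
    show "0 \<le> lm * (z \<bullet> z) - z \<bullet> (L *\<^sub>v z)" if "z \<in> carrier_vec ?n" "z \<bullet> z = 1" for z
      using cSup_upper[OF _ \<open>bdd_above S\<close>, of "z \<bullet> (L *\<^sub>v z)"] that unfolding lm_def S_def by auto
  qed (use rayleigh_gap_smult[OF L] in \<open>auto simp: algebra_simps\<close>)
  hence nsd: "nsd (L - lm \<cdot>\<^sub>m 1\<^sub>m ?n)" unfolding nsd_shift_iff[OF L] by simp
  have "0 \<le> z \<bullet> (L *\<^sub>v z) - l2 * (z \<bullet> z)" if "z \<in> carrier_vec ?n" "(\<Sum>k<?n. z$k) = 0" for z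
  proof (rule nonneg_on_unit_sphere_imp_nonneg[where P = "\<lambda>z. (\<Sum>k<?n. z$k) = 0", OF _ _ _ that])
    show "0 \<le> x \<bullet> (L *\<^sub>v x) - l2 * (x \<bullet> x)" if "x \<in> carrier_vec ?n" "(\<Sum>k<?n. x$k) = 0" "x \<bullet> x = 1" for x
    proof -
      have "lm \<le> V + x \<bullet> (L *\<^sub>v x)" unfolding lm_def
      proof (rule cSup_least[OF \<open>S \<noteq> {}\<close>])
        fix s assume "s \<in> S"
        then obtain y where "y \<in> carrier_vec ?n" "y \<bullet> y = 1" "s = y \<bullet> (L *\<^sub>v y)" unfolding S_def by blast
        thus "s \<le> V + x \<bullet> (L *\<^sub>v x)" using gap[of x y] that by simp
      qed
      thus ?thesis using that unfolding l2_def by simp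
    qed
  qed (use rayleigh_gap_smult[OF L] in \<open>auto simp: sum_distrib_left[symmetric]\<close>)
  hence psd: "psd (L + \<bar>l2\<bar> \<cdot>\<^sub>m ones_mat ?n - l2 \<cdot>\<^sub>m 1\<^sub>m ?n)"
    using N unfolding L_def by (intro psd_shift_of_centered_bound quadratic_form_Lw_shift[OF E]) auto
  show ?thesis
    unfolding sw_feasible_def using nsd psd w sw unfolding L_def l2_def by (intro exI[of _ lm] exI) auto
qed

definition emb_payoff :: "nat \<Rightarrow> (nat \<times> nat) set \<Rightarrow> real \<Rightarrow> (nat \<Rightarrow> real vec) \<times> (nat \<Rightarrow> real vec) \<Rightarrow> nat \<Rightarrow> real" where
  "emb_payoff N E c k i = intralayer_gap E (fst k) (snd k) + c * interlayer_gap N (fst k) (snd k) i"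

lemma emb_optimal_bounds_payoff:
  assumes opt: "emb_optimal N E c xi u v" and K: "k \<in> emb_configs N" and N: "0 < N"
  shows "\<exists>i<N. emb_payoff N E c k i \<le> emb_obj N E c xi u v"
proof -
  define xi' where "xi' = Min (interlayer_gap N (fst k) (snd k) ` {..<N})"
  have "xi' \<in> interlayer_gap N (fst k) (snd k) ` {..<N}" unfolding xi'_def using N by (intro Min_in) auto
  then obtain i where i: "i < N" "interlayer_gap N (fst k) (snd k) i = xi'" by auto
  have "emb_feasible N xi' (fst k) (snd k)" unfolding emb_feasible_iff xi'_def using K by simp
  hence "emb_obj N E c xi' (fst k) (snd k) \<le> emb_obj N E c xi u v" using opt unfolding emb_optimal_def by blast
  thus ?thesis using i unfolding emb_obj_eq emb_payoff_def by (intro exI[of _ i]) (simp add: algebra_simps)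
qed

lemma emb_payoff_convexlike_game:
  assumes E: "E \<subseteq> {(i,j). i < 2*N \<and> j < 2*N}" and opt: "emb_optimal N E c xi u v"
  shows "convexlike_game N (emb_configs N) (emb_payoff N E c) (emb_obj N E c xi u v)"
proof
  have "(u,v) \<in> emb_configs N" using opt unfolding emb_optimal_def emb_feasible_iff by blast
  thus N: "0 < N" and "emb_configs N \<noteq> {}" unfolding emb_configs_def by (cases N; auto)+
  show "\<exists>k\<in>emb_configs N. \<forall>i<N. t * emb_payoff N E c k1 i + (1 - t) * emb_payoff N E c k2 i \<le> emb_payoff N E c k i"
    if k12: "k1 \<in> emb_configs N" "k2 \<in> emb_configs N" and t: "0 \<le> t" "t \<le> 1" for k1 k2 t
  proof -
    obtain u1 v1 u2 v2 where k: "k1 = (u1,v1)" "k2 = (u2,v2)" by (cases k1, cases k2)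
    obtain u' v' where K': "(u',v') \<in> emb_configs N"
      and intra: "intralayer_gap E u' v' = t * intralayer_gap E u1 v1 + (1 - t) * intralayer_gap E u2 v2"
      and inter: "\<forall>i<N. interlayer_gap N u' v' i = t * interlayer_gap N u1 v1 i + (1 - t) * interlayer_gap N u2 v2 i"
      using emb_configs_mix[OF E k12[unfolded k] t] by blast
    have "t * emb_payoff N E c k1 i + (1 - t) * emb_payoff N E c k2 i = emb_payoff N E c (u',v') i" if "i < N" for i
      unfolding emb_payoff_def k fst_conv snd_conv intra inter[rule_format, OF that] by (simp add: algebra_simps)
    thus ?thesis using K' by auto
  qed
  show "\<exists>i<N. emb_payoff N E c k i \<le> emb_obj N E c xi u v" if "k \<in> emb_configs N" for k
    by (rule emb_optimal_bounds_payoff[OF opt that N])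
qed

text \<open>Strong duality: a mixed strategy of the game whose payoffs are the embedding objectives
  gives interlayer weights \<open>w\<close> for which the spectral width equals the embedding optimum.\<close>

lemma sw_attains_emb_optimum:
  assumes E: "E \<subseteq> {(i,j). i < 2*N \<and> j < 2*N}" and c: "0 \<le> c"
    and opt: "emb_optimal N E c xi u v"
  shows "\<exists>w lm l2 mu. sw_feasible N E c w lm l2 mu \<and> lm - l2 = emb_obj N E c xi u v"
proof -
  interpret convexlike_game N "emb_configs N" "emb_payoff N E c" "emb_obj N E c xi u v"
    by (rule emb_payoff_convexlike_game[OF E opt])
  obtain l where l: "\<forall>i<N. 0 \<le> l i" "(\<Sum>i<N. l i) = 1"
    "\<forall>k\<in>emb_configs N. (\<Sum>i<N. l i * emb_payoff N E c k i) \<le> emb_obj N E c xi u v"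
    using mixed_strategy_exists by blast
  define w where "w = (\<lambda>i. c * l i)"
  have "y \<bullet> (Lw N E w *\<^sub>v y) - x \<bullet> (Lw N E w *\<^sub>v x) \<le> emb_obj N E c xi u v"
    if "x \<in> carrier_vec (2*N)" "y \<in> carrier_vec (2*N)" "x \<bullet> x = 1" "y \<bullet> y = 1" "(\<Sum>k<2*N. x$k) = 0" for x y
  proof -
    let ?k = "(rank_one_config (2*N) x, rank_one_config (2*N) y)"
    have "(\<Sum>i<N. l i * emb_payoff N E c ?k i)
        = intralayer_gap E (fst ?k) (snd ?k) + (\<Sum>i<N. w i * interlayer_gap N (fst ?k) (snd ?k) i)"
      unfolding emb_payoff_def w_def using l(2)
      by (simp add: distrib_left sum.distrib sum_distrib_right[symmetric] algebra_simps)
    also have "\<dots> = y \<bullet> (Lw N E w *\<^sub>v y) - x \<bullet> (Lw N E w *\<^sub>v x)"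
      using rank_one_configs_payoff[OF E that(1,2) N] by simp
    finally show ?thesis using l(3) rank_one_configs_in_emb_configs[of x N y] that by fastforce
  qed
  moreover have "\<forall>i<N. 0 \<le> w i" "(\<Sum>i<N. w i) = c"
    unfolding w_def using l(1,2) c by (simp_all add: sum_distrib_left[symmetric])
  ultimately show ?thesis using sw_feasible_of_rayleigh_gap[OF E N] by blast
qed

section \<open>Complementary slackness\<close>

definition emb_coord :: "nat \<Rightarrow> (nat \<Rightarrow> real vec) \<Rightarrow> nat \<Rightarrow> real vec" where
  "emb_coord n u r = vec n (\<lambda>k. u k $ r)"

lemma emb_coord_carrier[simp]: "emb_coord n u r \<in> carrier_vec n"
  unfolding emb_coord_def by simp

lemma sqn_eq_sum_coords: "a \<in> carrier_vec n \<Longrightarrow> sqn a = (\<Sum>r<n. (a$r)^2)"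
  unfolding sqn_def by (simp add: scalar_prod_def lessThan_atLeast0 power2_eq_square)

lemma sqn_diff_eq_sum_coords:
  "a \<in> carrier_vec n \<Longrightarrow> b \<in> carrier_vec n \<Longrightarrow> sqn (a - b) = (\<Sum>r<n. (a$r - b$r)^2)"
  by (simp add: sqn_eq_sum_coords[of _ n])

lemma sum_norm_emb_coords:
  assumes "\<And>k. k < n \<Longrightarrow> u k \<in> carrier_vec n"
  shows "(\<Sum>r<n. emb_coord n u r \<bullet> emb_coord n u r) = (\<Sum>k<n. sqn (u k))"
proof -
  have "(\<Sum>r<n. emb_coord n u r \<bullet> emb_coord n u r) = (\<Sum>r<n. \<Sum>k<n. (u k $ r)^2)"
    by (simp add: emb_coord_def scalar_prod_def lessThan_atLeast0 power2_eq_square)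
  also have "\<dots> = (\<Sum>k<n. sqn (u k))"
    using assms by (subst sum.swap) (simp add: sqn_eq_sum_coords[of _ n])
  finally show ?thesis .
qed

lemma sum_quadratic_form_Lw_emb_coords:
  assumes E: "E \<subseteq> {(i,j). i < 2*N \<and> j < 2*N}" and u: "\<And>k. k < 2*N \<Longrightarrow> u k \<in> carrier_vec (2*N)"
  shows "(\<Sum>r<2*N. emb_coord (2*N) u r \<bullet> (Lw N E w *\<^sub>v emb_coord (2*N) u r))
       = (\<Sum>i<N. w i * sqn (u i - u (N+i))) + (\<Sum>(i,j)\<in>E. sqn (u i - u j))"
proof -
  let ?n = "2*N"
  have "(\<Sum>r<?n. emb_coord ?n u r \<bullet> (Lw N E w *\<^sub>v emb_coord ?n u r))
      = (\<Sum>r<?n. (\<Sum>i<N. w i * (u i $ r - u (N+i) $ r)^2) + (\<Sum>p\<in>E. (u (fst p) $ r - u (snd p) $ r)^2))"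
    using E by (intro sum.cong refl) (auto simp: quadratic_form_Lw emb_coord_def case_prod_beta
        intro!: sum.cong)
  also have "\<dots> = (\<Sum>i<N. w i * (\<Sum>r<?n. (u i $ r - u (N+i) $ r)^2))
      + (\<Sum>p\<in>E. \<Sum>r<?n. (u (fst p) $ r - u (snd p) $ r)^2)"
    by (simp add: sum.distrib sum_distrib_left sum.swap[of _ "{..<?n}"])
  also have "\<dots> = (\<Sum>i<N. w i * sqn (u i - u (N+i))) + (\<Sum>(i,j)\<in>E. sqn (u i - u j))"
    using u E by (auto simp: sqn_diff_eq_sum_coords[of _ ?n] case_prod_beta intro!: arg_cong2[where f = "(+)"] sum.cong)
  finally show ?thesis .
qed

lemma eigenvector_of_emb_coords:
  fixes A :: "real mat"
  assumes A: "A \<in> carrier_mat n n" and u: "\<And>k. k < n \<Longrightarrow> u k \<in> carrier_vec n"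
    and ev: "\<And>r. r < n \<Longrightarrow> A *\<^sub>v emb_coord n u r = l \<cdot>\<^sub>v emb_coord n u r"
    and p: "p \<in> carrier_vec n"
  shows "A *\<^sub>v vec n (\<lambda>k. p \<bullet> u k) = l \<cdot>\<^sub>v vec n (\<lambda>k. p \<bullet> u k)"
proof (rule eq_vecI)
  fix i assume "i < dim_vec (l \<cdot>\<^sub>v vec n (\<lambda>k. p \<bullet> u k))"
  hence i: "i < n" by simp
  have pu: "p \<bullet> u k = (\<Sum>r<n. p$r * u k $ r)" if "k < n" for k
    using u[OF that] by (simp add: scalar_prod_def lessThan_atLeast0)
  have evi: "(\<Sum>k<n. A $$ (i,k) * u k $ r) = l * u i $ r" if "r < n" for r
    using arg_cong[OF ev[OF that], of "\<lambda>v. v $ i"] A i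
    by (simp add: emb_coord_def scalar_prod_def row_def lessThan_atLeast0)
  have "(A *\<^sub>v vec n (\<lambda>k. p \<bullet> u k)) $ i = (\<Sum>k<n. \<Sum>r<n. p$r * (A $$ (i,k) * u k $ r))"
    using A i pu by (simp add: scalar_prod_def row_def lessThan_atLeast0 sum_distrib_left algebra_simps)
  also have "\<dots> = (\<Sum>r<n. p$r * (l * u i $ r))"
    by (subst sum.swap) (simp add: sum_distrib_left[symmetric] evi)
  also have "\<dots> = l * (p \<bullet> u i)" using pu[OF i] by (simp add: sum_distrib_left algebra_simps)
  finally show "(A *\<^sub>v vec n (\<lambda>k. p \<bullet> u k)) $ i = (l \<cdot>\<^sub>v vec n (\<lambda>k. p \<bullet> u k)) $ i" using i by simp
qed (use A in simp)

lemma duality_gap_eq: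
  fixes N :: nat and E :: "(nat \<times> nat) set" and w u v :: "nat \<Rightarrow> _"
  defines "L \<equiv> Lw N E w" and "X \<equiv> emb_coord (2*N) u" and "Y \<equiv> emb_coord (2*N) v"
  assumes E: "E \<subseteq> {(i,j). i < 2*N \<and> j < 2*N}"
    and sw: "sw_feasible N E c w lmax l2 mu" and emb: "emb_feasible N xi u v"
  shows "lmax - l2 - emb_obj N E c xi u v
      = (\<Sum>r<2*N. lmax * (Y r \<bullet> Y r) - Y r \<bullet> (L *\<^sub>v Y r))
      + (\<Sum>r<2*N. X r \<bullet> (L *\<^sub>v X r) - l2 * (X r \<bullet> X r))
      + (\<Sum>i<N. w i * (interlayer_gap N u v i - xi))"
proof -
  have cfg: "(u,v) \<in> emb_configs N" using emb unfolding emb_feasible_iff by blast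
  have sw_sum: "(\<Sum>i<N. w i) = c" using sw unfolding sw_feasible_def by blast
  have "(\<Sum>r<2*N. X r \<bullet> X r) = 1" "(\<Sum>r<2*N. Y r \<bullet> Y r) = 1"
    using cfg unfolding X_def Y_def emb_configs_def by (simp_all add: sum_norm_emb_coords)
  moreover have "(\<Sum>r<2*N. X r \<bullet> (L *\<^sub>v X r))
      = (\<Sum>i<N. w i * sqn (u i - u (N+i))) + (\<Sum>(i,j)\<in>E. sqn (u i - u j))"
    "(\<Sum>r<2*N. Y r \<bullet> (L *\<^sub>v Y r))
      = (\<Sum>i<N. w i * sqn (v i - v (N+i))) + (\<Sum>(i,j)\<in>E. sqn (v i - v j))"
    using cfg unfolding X_def Y_def L_def emb_configs_def
    by (simp_all add: sum_quadratic_form_Lw_emb_coords[OF E])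
  ultimately show ?thesis
    unfolding emb_obj_def interlayer_gap_def sw_sum[symmetric]
    by (simp add: sum_subtractf sum_distrib_left[symmetric] sum_distrib_right right_diff_distrib)
qed

lemma zero_duality_gap_imp_eigenvectors:
  fixes N :: nat and E :: "(nat \<times> nat) set" and w u v :: "nat \<Rightarrow> _"
  defines "L \<equiv> Lw N E w" and "X \<equiv> emb_coord (2*N) u" and "Y \<equiv> emb_coord (2*N) v"
  assumes E: "E \<subseteq> {(i,j). i < 2*N \<and> j < 2*N}"
    and sw: "sw_feasible N E c w lmax l2 mu" and emb: "emb_feasible N xi u v"
    and gap: "lmax - l2 \<le> emb_obj N E c xi u v"
  shows "\<forall>r<2*N. X r \<bullet> (L *\<^sub>v X r) = l2 * (X r \<bullet> X r) \<and> L *\<^sub>v X r = l2 \<cdot>\<^sub>v X r"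
    and "\<forall>r<2*N. Y r \<bullet> (L *\<^sub>v Y r) = lmax * (Y r \<bullet> Y r) \<and> L *\<^sub>v Y r = lmax \<cdot>\<^sub>v Y r"
proof -
  let ?n = "2*N"
  have L: "L \<in> carrier_mat ?n ?n" and sym: "L\<^sup>T = L" unfolding L_def by (simp_all add: Lw_symmetric)
  have nsd: "nsd (L - lmax \<cdot>\<^sub>m 1\<^sub>m ?n)" and psd: "psd (L + mu \<cdot>\<^sub>m ones_mat ?n - l2 \<cdot>\<^sub>m 1\<^sub>m ?n)"
    and w: "\<forall>i<N. 0 \<le> w i" using sw unfolding sw_feasible_def L_def by auto
  have cfg: "(u,v) \<in> emb_configs N" and xi: "\<forall>i<N. xi \<le> interlayer_gap N u v i"
    using emb unfolding emb_feasible_iff by auto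
  have centered: "(\<Sum>k<?n. X r $ k) = 0" if "r < ?n" for r
    using cfg that unfolding X_def emb_coord_def emb_configs_def by simp
  have a: "0 \<le> lmax * (Y r \<bullet> Y r) - Y r \<bullet> (L *\<^sub>v Y r)" for r
    using nsd unfolding nsd_shift_iff[OF L] Y_def by simp
  have b: "0 \<le> X r \<bullet> (L *\<^sub>v X r) - l2 * (X r \<bullet> X r)" if "r < ?n" for r
  proof -
    have "l2 * (X r \<bullet> X r) \<le> X r \<bullet> (L *\<^sub>v X r) + mu * (\<Sum>k<?n. X r $ k)^2"
      using psd unfolding psd_shift_iff[OF L] X_def by simp
    thus ?thesis using centered[OF that] by simp
  qed
  have "0 \<le> (\<Sum>i<N. w i * (interlayer_gap N u v i - xi))"
    using w xi by (intro sum_nonneg mult_nonneg_nonneg) auto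
  hence "(\<Sum>r<?n. lmax * (Y r \<bullet> Y r) - Y r \<bullet> (L *\<^sub>v Y r)) = 0 \<and>
      (\<Sum>r<?n. X r \<bullet> (L *\<^sub>v X r) - l2 * (X r \<bullet> X r)) = 0"
    using duality_gap_eq[OF E sw emb, folded L_def X_def Y_def] gap
      sum_nonneg[of "{..<?n}" "\<lambda>r. lmax * (Y r \<bullet> Y r) - Y r \<bullet> (L *\<^sub>v Y r)"]
      sum_nonneg[of "{..<?n}" "\<lambda>r. X r \<bullet> (L *\<^sub>v X r) - l2 * (X r \<bullet> X r)"] a b by fastforce
  hence "\<forall>r\<in>{..<?n}. lmax * (Y r \<bullet> Y r) - Y r \<bullet> (L *\<^sub>v Y r) = 0"
    and "\<forall>r\<in>{..<?n}. X r \<bullet> (L *\<^sub>v X r) - l2 * (X r \<bullet> X r) = 0"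
    by (intro iffD1[OF sum_nonneg_eq_0_iff]; use a b in force)+
  hence eqX: "X r \<bullet> (L *\<^sub>v X r) = l2 * (X r \<bullet> X r)"
    and eqY: "Y r \<bullet> (L *\<^sub>v Y r) = lmax * (Y r \<bullet> Y r)" if "r < ?n" for r
    using that by auto
  show "\<forall>r<?n. X r \<bullet> (L *\<^sub>v X r) = l2 * (X r \<bullet> X r) \<and> L *\<^sub>v X r = l2 \<cdot>\<^sub>v X r"
    using eqX psd_shift_rayleigh_eq_imp_eigenvector[OF L sym psd _ centered] unfolding X_def by simp
  show "\<forall>r<?n. Y r \<bullet> (L *\<^sub>v Y r) = lmax * (Y r \<bullet> Y r) \<and> L *\<^sub>v Y r = lmax \<cdot>\<^sub>v Y r"
    using eqY nsd_shift_rayleigh_eq_imp_eigenvector[OF L sym nsd] unfolding Y_def by simp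
qed

lemma zero_duality_gap_eigenvalues:
  fixes N :: nat and E :: "(nat \<times> nat) set" and w u v :: "nat \<Rightarrow> _"
  defines "L \<equiv> Lw N E w"
  assumes E: "E \<subseteq> {(i,j). i < 2*N \<and> j < 2*N}"
    and sw: "sw_feasible N E c w lmax l2 mu" and emb: "emb_feasible N xi u v"
    and gap: "lmax - l2 \<le> emb_obj N E c xi u v"
  shows "lambda2 L = l2" and "lambda_max L = lmax"
proof -
  let ?n = "2*N"
  let ?X = "emb_coord ?n u" and ?Y = "emb_coord ?n v"
  have L: "L \<in> carrier_mat ?n ?n" and sym: "L\<^sup>T = L" unfolding L_def by (simp_all add: Lw_symmetric)
  have nsd: "nsd (L - lmax \<cdot>\<^sub>m 1\<^sub>m ?n)" and psd: "psd (L + mu \<cdot>\<^sub>m ones_mat ?n - l2 \<cdot>\<^sub>m 1\<^sub>m ?n)"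
    and w: "\<forall>i<N. 0 \<le> w i" using sw unfolding sw_feasible_def L_def by auto
  have cfg: "(u,v) \<in> emb_configs N" using emb unfolding emb_feasible_iff by blast
  note eig = zero_duality_gap_imp_eigenvectors[OF E sw emb gap, folded L_def]
  have nonzero: "\<exists>r<?n. f r \<noteq> 0\<^sub>v ?n" if "(\<Sum>r<?n. f r \<bullet> f r) = 1" for f :: "nat \<Rightarrow> real vec"
    using that by (metis (no_types, lifting) lessThan_iff scalar_prod_right_zero sum.neutral zero_carrier_vec zero_neq_one)
  obtain r where r: "r < ?n" "?X r \<noteq> 0\<^sub>v ?n"
    using nonzero[of ?X] cfg unfolding emb_configs_def by (auto simp: sum_norm_emb_coords)
  obtain s where s: "s < ?n" "?Y s \<noteq> 0\<^sub>v ?n"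
    using nonzero[of ?Y] cfg unfolding emb_configs_def by (auto simp: sum_norm_emb_coords)
  have "0 \<le> l2 * (?X r \<bullet> ?X r)"
    using eig(1) r(1) quadratic_form_Lw_nonneg[OF E _ w, of "?X r"] unfolding L_def by simp
  hence "0 \<le> l2" using scalar_prod_self_pos_iff[of "?X r" ?n] r by (simp add: zero_le_mult_iff)
  moreover have "(\<Sum>k<?n. ?X r $ k) = 0" using cfg r(1) unfolding emb_configs_def emb_coord_def by simp
  ultimately show "lambda2 L = l2"
    using eig(1) r unfolding L_def
    by (intro lambda2_eqI[OF _ sym[unfolded L_def] quadratic_form_Lw_shift[OF E] psd[unfolded L_def]]) auto
  show "lambda_max L = lmax"
    using eig(2) s by (intro lambda_max_eqI[OF L sym nsd]) auto
qed

theorem proposition7: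
  fixes N :: nat and E1 E2 :: "(nat \<times> nat) set" and c xi :: real
    and wopt :: "nat \<Rightarrow> real" and u v :: "nat \<Rightarrow> real vec"
  assumes E1: "E1 \<subseteq> {(i, j). i < j \<and> j < N}"
    and E2: "E2 \<subseteq> {(i, j). N \<le> i \<and> i < j \<and> j < 2*N}"
    and conn: "connected_on (2*N) (E1 \<union> E2 \<union> E3 N)"
    and c: "0 \<le> c"
    and wopt: "sw_optimal N (E1 \<union> E2) c wopt"
    and emb: "emb_optimal N (E1 \<union> E2) c xi u v"
  shows "\<forall>p\<in>carrier_vec (2*N).
           vec (2*N) (\<lambda>i. p \<bullet> u i) \<in> eigenspace (Lw N (E1 \<union> E2) wopt) (lambda2 (Lw N (E1 \<union> E2) wopt)) \<and>
           vec (2*N) (\<lambda>i. p \<bullet> v i) \<in> eigenspace (Lw N (E1 \<union> E2) wopt) (lambda_max (Lw N (E1 \<union> E2) wopt))"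
proof -
  have E: "E1 \<union> E2 \<subseteq> {(i,j). i < 2*N \<and> j < 2*N}" using E1 E2 by auto
  obtain lmax l2 mu where sw: "sw_feasible N (E1 \<union> E2) c wopt lmax l2 mu"
    and min: "\<And>w lm l2' mu'. sw_feasible N (E1 \<union> E2) c w lm l2' mu' \<Longrightarrow> lmax - l2 \<le> lm - l2'"
    using wopt unfolding sw_optimal_def by blast
  have feas: "emb_feasible N xi u v" using emb unfolding emb_optimal_def by blast
  obtain w lm l2' mu' where "sw_feasible N (E1 \<union> E2) c w lm l2' mu'" "lm - l2' = emb_obj N (E1 \<union> E2) c xi u v"
    using sw_attains_emb_optimum[OF E c emb] by blast
  hence gap: "lmax - l2 \<le> emb_obj N (E1 \<union> E2) c xi u v" using min by fastforce
  have "\<And>k. k < 2*N \<Longrightarrow> u k \<in> carrier_vec (2*N) \<and> v k \<in> carrier_vec (2*N)"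
    using feas unfolding emb_feasible_def by blast
  thus ?thesis
    using eigenvector_of_emb_coords[OF Lw_carrier, where u = u] eigenvector_of_emb_coords[OF Lw_carrier, where u = v]
      zero_duality_gap_imp_eigenvectors[OF E sw feas gap]
    unfolding eigenspace_def zero_duality_gap_eigenvalues[OF E sw feas gap]
    by (simp add: carrier_matD(1)[OF Lw_carrier])
qed

end
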